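(* Let $0<\varepsilon\le1$. The series $\sum_{j=1}^\infty\frac{\phi_j(x)\phi_j(y)}{\lambda_j^2}$ converges uniformly for $(x,y)\in[0,1]^2\setminus(0,\varepsilon)^2$. For all $0\le x,y\le1$ this series is absolutely convergent, and $$\sum_{j=1}^\infty\frac{\phi_j(x)\phi_j(y)}{\lambda_j^2}=K_2(x,y).$$
   Context: Let $K:[0,1]\times[0,1]\to\mathbb R$ be defined by $K(x,y)=\frac12-\{(xy)^{-1}\}$ if $0<x,y\le 1$, and $K(x,y)=0$ if $0\le x,y\le1$ and $xy=0$, where $\{\alpha\}=\alpha-\lfloor\alpha\rfloor$. Define $K_2(x,y)=\int_0^1K(x,z)K(z,y)\,dz$ for $0\le x,y\le1$. Let $L^2([0,1])$ denote the space of real-valued Lebesgue measurable square-integrable functions on $[0,1]$, with $\langle f,g\rangle=\int_0^1 f(x)g(x)\,dx$ and $\|f\|=\langle f,f\rangle^{1/2}$. A function $\phi$ is an eigenfunction of $K$ (with eigenvalue $\lambda\in\mathbb R$) if $\phi\in L^2([0,1])$, $\|\phi\|>0$, and $\phi(x)=\lambda\int_0^1 K(x,y)\phi(y)\,dy$ for every $x\in[0,1]$. Let $\phi_1,\phi_2,\ldots$ be a maximal orthonormal system in $L^2([0,1])$ of eigenfunctions of $K$, $\phi_j$ having the nonzero real eigenvalue $\lambda_j$, numbered so that $0<|\lambda_1|\le|\lambda_2|\le\cdots$ and $\lambda_j\ge\lambda_{j+1}$ whenever $|\lambda_j|=|\lambda_{j+1}|$. *)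

theory Defs
  imports "HOL-Analysis.Analysis"
begin

definition K :: "real \<Rightarrow> real \<Rightarrow> real" where
  "K x y = (if x * y = 0 then 0 else 1/2 - frac (1 / (x * y)))"

abbreviation int01 :: "(real \<Rightarrow> real) \<Rightarrow> real" where
  "int01 f \<equiv> integral\<^sup>L (lebesgue_on {0..1}) f"

definition K2 :: "real \<Rightarrow> real \<Rightarrow> real" where
  "K2 x y = int01 (\<lambda>z. K x z * K z y)"

definition L2_01 :: "(real \<Rightarrow> real) set" where
  "L2_01 = {f. f \<in> borel_measurable (lebesgue_on {0..1})
               \<and> integrable (lebesgue_on {0..1}) (\<lambda>x. (f x)\<^sup>2)}"

definition inner01 :: "(real \<Rightarrow> real) \<Rightarrow> (real \<Rightarrow> real) \<Rightarrow> real" where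
  "inner01 f g = int01 (\<lambda>x. f x * g x)"

definition norm01 :: "(real \<Rightarrow> real) \<Rightarrow> real" where
  "norm01 f = sqrt (inner01 f f)"

definition eigenfun :: "(real \<Rightarrow> real) \<Rightarrow> real \<Rightarrow> bool" where
  "eigenfun phi lam \<longleftrightarrow> phi \<in> L2_01 \<and> norm01 phi > 0 \<and>
     (\<forall>x\<in>{0..1}. phi x = lam * int01 (\<lambda>y. K x y * phi y))"

text \<open>phi (indexed from 0, i.e. phi 0 is the paper's phi_1) is a maximal orthonormal
  system of eigenfunctions of K, phi j having the nonzero eigenvalue lam j, ordered as in the paper.\<close>
definition max_eigen_system :: "(nat \<Rightarrow> real \<Rightarrow> real) \<Rightarrow> (nat \<Rightarrow> real) \<Rightarrow> bool" where
  "max_eigen_system phi lam \<longleftrightarrow>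
     (\<forall>j. eigenfun (phi j) (lam j) \<and> lam j \<noteq> 0) \<and>
     (\<forall>i j. inner01 (phi i) (phi j) = (if i = j then 1 else 0)) \<and>
     (\<forall>psi mu. eigenfun psi mu \<and> mu \<noteq> 0 \<longrightarrow> \<not> (\<forall>j. inner01 psi (phi j) = 0)) \<and>
     0 < \<bar>lam 0\<bar> \<and>
     (\<forall>j. \<bar>lam j\<bar> \<le> \<bar>lam (Suc j)\<bar>) \<and>
     (\<forall>j. \<bar>lam j\<bar> = \<bar>lam (Suc j)\<bar> \<longrightarrow> lam j \<ge> lam (Suc j))"

end

(*
  The eigenfunctions give the Fourier coefficients of the rows of the kernel:
  <K(x,.), phi j> = phi j x / lam j.  Hence the n-th partial sum of the series equals
  K2 x y - <K_tail n x, K_tail n y>, where K_tail n x = K(x,.) - sum_{j<n} phi j x * phi j / lam j,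
  and by Cauchy-Schwarz everything reduces to ||K_tail n x|| -> 0, uniformly for x in [eps, 1].

  The integral operator Kop_tail n with kernel K_tail n is self-adjoint and compact: it maps
  bounded sets to uniformly bounded sets that are equicontinuous away from 0, because
  x |-> K(x,.) is continuous into L^2 for x > 0.  An eigenfunction of Kop_tail n is an
  eigenfunction of K orthogonal to phi 0, ..., phi (n - 1), so maximality of the system yields
  ||Kop_tail n|| <= 1 / |lam n|, which tends to 0 because sum_j 1 / lam j ^ 2 <= 1/4 (Bessel's
  inequality for K(x,.), integrated over x).  Finally ||K_tail n y||^2 = Kop_tail n (K_tail n y) y
  is the value at y of a function that is small in L^2 and has a modulus of continuity
  independent of n, hence it is small.
*)

theory Submission
  imports Defs "HOL-Library.Diagonal_Subsequence"
begin

section \<open>Real sequences and sequences of real functions\<close>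

lemma log_convex_ratio_convergent:
  fixes n :: "nat \<Rightarrow> real"
  assumes pos: "n 0 > 0" "n (Suc 0) > 0"
    and log_convex: "\<And>k. (n (Suc k))\<^sup>2 \<le> n k * n (Suc (Suc k))"
    and bounded: "\<And>k. n (Suc k) \<le> B * n k"
  shows "\<forall>k. n k > 0" and "\<exists>q. (\<lambda>k. n (Suc k) / n k) \<longlonglongrightarrow> q \<and> n (Suc 0) / n 0 \<le> q"
proof -
  have "n k > 0 \<and> n (Suc k) > 0" for k
  proof (induction k)
    case (Suc k)
    then have "0 < (n (Suc k))\<^sup>2"
      by simp
    also have "\<dots> \<le> n k * n (Suc (Suc k))"
      by (rule log_convex)
    finally show ?case
      using Suc by (simp add: zero_less_mult_iff)
  qed (use pos in simp)
  then show n_pos: "\<forall>k. n k > 0"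
    by blast
  have "incseq (\<lambda>k. n (Suc k) / n k)"
  proof (rule incseq_SucI)
    fix k
    have "n (Suc k) * n (Suc k) \<le> n (Suc (Suc k)) * n k"
      using log_convex[of k] by (simp add: power2_eq_square mult.commute)
    then show "n (Suc k) / n k \<le> n (Suc (Suc k)) / n (Suc k)"
      using n_pos by (simp add: divide_simps)
  qed
  moreover have bdd: "bdd_above (range (\<lambda>k. n (Suc k) / n k))"
    using bounded n_pos by (intro bdd_aboveI[where M=B]) (auto simp: pos_divide_le_eq)
  ultimately have "(\<lambda>k. n (Suc k) / n k) \<longlonglongrightarrow> (SUP k. n (Suc k) / n k)"
    by (intro LIMSEQ_incseq_SUP)
  moreover have "n (Suc 0) / n 0 \<le> (SUP k. n (Suc k) / n k)"
    by (rule cSUP_upper[OF _ bdd]) simp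
  ultimately show "\<exists>q. (\<lambda>k. n (Suc k) / n k) \<longlonglongrightarrow> q \<and> n (Suc 0) / n 0 \<le> q"
    by blast
qed

lemma bounded_imp_convergent_diagonal_subseq:
  fixes F :: "nat \<Rightarrow> nat \<Rightarrow> real"
  assumes bounded: "\<And>k n. \<bar>F k n\<bar> \<le> B"
  shows "\<exists>d. strict_mono d \<and> (\<forall>n. convergent (\<lambda>k. F (d k) n))"
proof -
  let ?P = "\<lambda>n s. convergent (\<lambda>k. F (s k) n)"
  interpret diag: subseqs ?P
  proof (unfold convergent_def subseqs_def, intro allI impI)
    fix n :: nat and s :: "nat \<Rightarrow> nat"
    have "F (s k) n \<in> {-B..B}" for k
      using bounded[of "s k" n] by (simp add: abs_le_iff minus_le_iff)
    then obtain l s' where "strict_mono s'" "((\<lambda>k. F (s k) n) \<circ> s') \<longlonglongrightarrow> l"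
      using compact_Icc compact_imp_seq_compact seq_compactE by metis
    then show "\<exists>s'. strict_mono s' \<and> (\<exists>l. (\<lambda>k. F ((s \<circ> s') k) n) \<longlonglongrightarrow> l)"
      by (auto simp: comp_def)
  qed
  have "?P n diag.diagseq" for n
  proof -
    have eq: "(\<lambda>k. F ((diag.seqseq (Suc n) \<circ> (\<lambda>k. diag.fold_reduce (Suc n) k (Suc n + k))) k) n)
        = (\<lambda>k. F (diag.seqseq (Suc n) k) n) \<circ> (\<lambda>k. diag.fold_reduce (Suc n) k (Suc n + k))"
      by auto
    have "?P n (diag.diagseq \<circ> ((+) (Suc n)))"
      unfolding diag.diagseq_seqseq eq
      by (intro convergent_subseq_convergent diag.seqseq_holds diag.subseq_diagonal_rest)
    then obtain L where "(\<lambda>k. F (diag.diagseq (k + Suc n)) n) \<longlonglongrightarrow> L"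
      by (auto simp: add.commute dest: convergentD)
    then have "(\<lambda>k. F (diag.diagseq k) n) \<longlonglongrightarrow> L"
      by (rule LIMSEQ_offset)
    then show ?thesis
      by (auto simp: convergent_def)
  qed
  with diag.subseq_diagseq show ?thesis
    by blast
qed

text \<open>An Arzela--Ascoli argument through the rational points; the modulus of continuity \<open>W x\<close> is
  only needed at points \<open>x > 0\<close>.\<close>

lemma pointwise_convergent_subseq:
  fixes F :: "nat \<Rightarrow> real \<Rightarrow> real" and W :: "real \<Rightarrow> real \<Rightarrow> real"
  assumes bounded: "\<And>k x. \<bar>F k x\<bar> \<le> B"
    and vanish_0: "\<And>k. F k 0 = 0"
    and modulus: "\<And>k x z. x \<in> {0..1} \<Longrightarrow> z \<in> {0..1} \<Longrightarrow> \<bar>F k x - F k z\<bar> \<le> W x z"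
    and modulus_small: "\<And>x e. x \<in> {0<..1} \<Longrightarrow> e > 0 \<Longrightarrow> \<exists>d>0. \<forall>z. \<bar>z - x\<bar> < d \<longrightarrow> W x z < e"
  shows "\<exists>s. strict_mono s \<and> (\<forall>x\<in>{0..1}. convergent (\<lambda>i. F (s i) x))"
proof -
  obtain m :: "real \<Rightarrow> nat" where "bij_betw m \<rat> UNIV"
    using countable_rat Rats_infinite by (erule countableE_infinite)
  then obtain r :: "nat \<Rightarrow> real" where bij: "bij_betw r UNIV \<rat>"
    using bij_betw_inv by blast
  have dense_r: "\<And>x y. x < y \<Longrightarrow> \<exists>n. x < r n \<and> r n < y"
    by (metis Rats_dense_in_real bij f_the_inv_into_f bij_betw_def)
  obtain d where "strict_mono d" and convergent_at_r: "\<And>n. convergent (\<lambda>k. F (d k) (r n))"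
    using bounded_imp_convergent_diagonal_subseq[of "\<lambda>k n. F k (r n)" B] bounded by blast
  have "Cauchy (\<lambda>i. F (d i) x)" if x: "x \<in> {0<..1}" for x
  proof (rule metric_CauchyI)
    fix e :: real assume e: "e > 0"
    obtain \<delta> where \<delta>: "\<delta> > 0" "\<And>z. \<bar>z - x\<bar> < \<delta> \<Longrightarrow> W x z < e / 3"
      using modulus_small[OF x, of "e / 3"] e by auto
    obtain n where n: "max 0 (x - \<delta>) < r n" "r n < x"
      using dense_r[of "max 0 (x - \<delta>)" x] x \<delta> by auto
    have x01: "x \<in> {0..1}" and rn: "r n \<in> {0..1}" "W x (r n) < e / 3"
      using n x \<delta>(2)[of "r n"] by auto
    obtain M where M: "\<And>i j. i \<ge> M \<Longrightarrow> j \<ge> M \<Longrightarrow> dist (F (d i) (r n)) (F (d j) (r n)) < e / 3"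
      using convergent_Cauchy[OF convergent_at_r[of n]] e unfolding Cauchy_def
      by (meson divide_pos_pos zero_less_numeral)
    have "dist (F (d i) x) (F (d j) x) < e" if "i \<ge> M" "j \<ge> M" for i j
      using M[OF that] modulus[OF x01 rn(1), of "d i"] modulus[OF x01 rn(1), of "d j"] rn(2)
      unfolding dist_real_def by arith
    then show "\<exists>M. \<forall>i\<ge>M. \<forall>j\<ge>M. dist (F (d i) x) (F (d j) x) < e"
      by blast
  qed
  then have "convergent (\<lambda>i. F (d i) x)" if "x \<in> {0..1}" for x
    using that vanish_0 by (cases "x = 0") (auto simp: Cauchy_convergent_iff convergent_const)
  with \<open>strict_mono d\<close> show ?thesis
    by blast
qed

section \<open>The space $L^2[0,1]$\<close>

abbreviation lebesgue01 :: "real measure" where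
  "lebesgue01 \<equiv> lebesgue_on {0..1}"

lemma finite_measure_lebesgue01: "finite_measure lebesgue01"
  by (rule finite_measure_lebesgue_on) simp

lemma sigma_finite_lebesgue01: "sigma_finite_measure lebesgue01"
  using finite_measure_lebesgue01 by (rule finite_measure.axioms(1))

lemma integrable_lebesgue01_const: "integrable lebesgue01 (\<lambda>x. c::real)"
  using finite_measure.integrable_const[OF finite_measure_lebesgue01] by blast

lemma integral_lebesgue01_le_const:
  fixes f :: "real \<Rightarrow> real"
  assumes "integrable lebesgue01 f" "\<And>x. x \<in> {0..1} \<Longrightarrow> f x \<le> c"
  shows "int01 f \<le> c"
proof -
  have "int01 f \<le> int01 (\<lambda>x. c)"
    by (rule integral_mono[OF assms(1) integrable_lebesgue01_const]) (use assms(2) in auto)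
  also have "\<dots> = c"
    by (simp add: measure_restrict_space)
  finally show ?thesis .
qed

lemma integral_lebesgue01_indicator_Icc:
  assumes "0 \<le> c" "c \<le> d" "d \<le> 1"
  shows "int01 (indicator {c..d} :: real \<Rightarrow> real) = d - c"
proof -
  have "int01 (indicator {c..d} :: real \<Rightarrow> real) = measure lebesgue01 {c..d}"
    using assms by (subst Bochner_Integration.integral_indicator) (auto simp: sets_restrict_space_iff)
  also have "\<dots> = d - c"
    using assms by (subst measure_restrict_space) auto
  finally show ?thesis .
qed

lemma borel_measurable_lebesgue01:
  "g \<in> borel_measurable borel \<Longrightarrow> g \<in> borel_measurable lebesgue01"
  by (rule measurable_restrict_space1) (rule measurable_completion, simp)

lemma AE_lebesgue01_notin_countable:
  assumes "countable N"
  shows "AE y in lebesgue01. y \<notin> N"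
proof (rule AE_I')
  have "N \<inter> {0..1} \<in> null_sets lebesgue"
    using countable_imp_null_set_lborel[of "N \<inter> {0..1}"] assms
    by (auto intro: null_sets_completionI countable_subset)
  then show "N \<inter> {0..1} \<in> null_sets lebesgue01"
    by (subst null_sets_restrict_space) auto
qed auto

lemma L2_01I:
  "f \<in> borel_measurable lebesgue01 \<Longrightarrow> integrable lebesgue01 (\<lambda>x. (f x)\<^sup>2) \<Longrightarrow> f \<in> L2_01"
  by (simp add: L2_01_def)

lemma L2_01_measurable: "f \<in> L2_01 \<Longrightarrow> f \<in> borel_measurable lebesgue01"
  by (simp add: L2_01_def)

lemma L2_01_integrable_square: "f \<in> L2_01 \<Longrightarrow> integrable lebesgue01 (\<lambda>x. (f x)\<^sup>2)"
  by (simp add: L2_01_def)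

lemma L2_01_integrable_mult:
  assumes "f \<in> L2_01" "g \<in> L2_01"
  shows "integrable lebesgue01 (\<lambda>x. f x * g x)"
proof (rule Bochner_Integration.integrable_bound)
  show "integrable lebesgue01 (\<lambda>x. ((f x)\<^sup>2 + (g x)\<^sup>2) / 2)"
    using L2_01_integrable_square[OF assms(1)] L2_01_integrable_square[OF assms(2)] by auto
  show "(\<lambda>x. f x * g x) \<in> borel_measurable lebesgue01"
    using assms by (intro borel_measurable_times L2_01_measurable)
  have "\<bar>f x * g x\<bar> \<le> ((f x)\<^sup>2 + (g x)\<^sup>2) / 2" for x
    using sum_squares_bound[of "\<bar>f x\<bar>" "\<bar>g x\<bar>"] by (simp add: abs_mult)
  then show "AE x in lebesgue01. norm (f x * g x) \<le> norm (((f x)\<^sup>2 + (g x)\<^sup>2) / 2)"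
    by (intro AE_I2) simp
qed

lemma L2_01_bounded:
  assumes "f \<in> borel_measurable lebesgue01" "\<And>x. x \<in> {0..1} \<Longrightarrow> \<bar>f x\<bar> \<le> B"
  shows "f \<in> L2_01"
proof (rule L2_01I[OF assms(1)])
  have "\<bar>f x\<bar>\<^sup>2 \<le> B\<^sup>2" if "x \<in> {0..1}" for x
    using assms(2)[OF that] by (intro power_mono) auto
  then show "integrable lebesgue01 (\<lambda>x. (f x)\<^sup>2)"
    using assms(1)
    by (intro Bochner_Integration.integrable_bound[OF integrable_lebesgue01_const[of "B\<^sup>2"]] AE_I2)
      auto
qed

lemma L2_01_cmult: "f \<in> L2_01 \<Longrightarrow> (\<lambda>x. c * f x) \<in> L2_01"
  by (simp add: L2_01_def power_mult_distrib borel_measurable_times)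

lemma L2_01_add:
  assumes "f \<in> L2_01" "g \<in> L2_01"
  shows "(\<lambda>x. f x + g x) \<in> L2_01"
proof (rule L2_01I)
  show "(\<lambda>x. f x + g x) \<in> borel_measurable lebesgue01"
    using assms by (intro borel_measurable_add L2_01_measurable)
  have "integrable lebesgue01 (\<lambda>x. (f x)\<^sup>2 + (g x)\<^sup>2 + 2 * (f x * g x))"
    using assms by (intro Bochner_Integration.integrable_add Bochner_Integration.integrable_mult_right
        L2_01_integrable_square L2_01_integrable_mult)
  then show "integrable lebesgue01 (\<lambda>x. (f x + g x)\<^sup>2)"
    by (simp add: power2_sum mult.assoc)
qed

lemma L2_01_diff: "f \<in> L2_01 \<Longrightarrow> g \<in> L2_01 \<Longrightarrow> (\<lambda>x. f x - g x) \<in> L2_01"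
  using L2_01_add[of f "\<lambda>x. (-1) * g x"] L2_01_cmult[of g "-1"] by simp

lemma L2_01_sum: "(\<And>j. j \<in> A \<Longrightarrow> f j \<in> L2_01) \<Longrightarrow> (\<lambda>x. \<Sum>j\<in>A. f j x) \<in> L2_01"
proof (induction A rule: infinite_finite_induct)
  case (insert a A)
  then show ?case
    using L2_01_add[of "f a" "\<lambda>x. \<Sum>j\<in>A. f j x"] by simp
qed (auto intro: L2_01_bounded[of _ 0])

lemma L2_01_integrable: "f \<in> L2_01 \<Longrightarrow> integrable lebesgue01 f"
  using L2_01_integrable_mult[of f "\<lambda>x. 1"] L2_01_bounded[of "\<lambda>x. 1" 1] by simp

lemma L2_01_abs: "f \<in> L2_01 \<Longrightarrow> (\<lambda>x. \<bar>f x\<bar>) \<in> L2_01"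
  by (simp add: L2_01_def borel_measurable_abs)

lemma inner01_commute: "inner01 f g = inner01 g f"
  by (simp add: inner01_def mult.commute)

lemma inner01_cong:
  "(\<And>x. x \<in> {0..1} \<Longrightarrow> f x = f' x) \<Longrightarrow> (\<And>x. x \<in> {0..1} \<Longrightarrow> g x = g' x) \<Longrightarrow>
    inner01 f g = inner01 f' g'"
  unfolding inner01_def by (rule Bochner_Integration.integral_cong) auto

lemma inner01_add_left:
  "f \<in> L2_01 \<Longrightarrow> g \<in> L2_01 \<Longrightarrow> h \<in> L2_01 \<Longrightarrow>
    inner01 (\<lambda>x. f x + g x) h = inner01 f h + inner01 g h"
  by (simp add: inner01_def distrib_right L2_01_integrable_mult)

lemma inner01_add_right:
  "h \<in> L2_01 \<Longrightarrow> f \<in> L2_01 \<Longrightarrow> g \<in> L2_01 \<Longrightarrow>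
    inner01 h (\<lambda>x. f x + g x) = inner01 h f + inner01 h g"
  using inner01_add_left[of f g h] inner01_commute by metis

lemma inner01_diff_left:
  "f \<in> L2_01 \<Longrightarrow> g \<in> L2_01 \<Longrightarrow> h \<in> L2_01 \<Longrightarrow>
    inner01 (\<lambda>x. f x - g x) h = inner01 f h - inner01 g h"
  by (simp add: inner01_def left_diff_distrib L2_01_integrable_mult)

lemma inner01_diff_right:
  "h \<in> L2_01 \<Longrightarrow> f \<in> L2_01 \<Longrightarrow> g \<in> L2_01 \<Longrightarrow>
    inner01 h (\<lambda>x. f x - g x) = inner01 h f - inner01 h g"
  using inner01_diff_left[of f g h] inner01_commute by metis

lemma inner01_cmult_left: "inner01 (\<lambda>x. c * f x) h = c * inner01 f h"
  by (simp add: inner01_def mult.assoc)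

lemma inner01_cmult_right: "inner01 h (\<lambda>x. c * f x) = c * inner01 h f"
  using inner01_cmult_left inner01_commute by metis

lemma inner01_sum_left:
  "(\<And>j. j \<in> A \<Longrightarrow> f j \<in> L2_01) \<Longrightarrow> h \<in> L2_01 \<Longrightarrow>
    inner01 (\<lambda>x. \<Sum>j\<in>A. f j x) h = (\<Sum>j\<in>A. inner01 (f j) h)"
  unfolding inner01_def sum_distrib_right
  by (rule Bochner_Integration.integral_sum) (auto intro: L2_01_integrable_mult)

lemma inner01_self_nonneg: "0 \<le> inner01 f f"
  by (simp add: inner01_def)

lemma norm01_nonneg: "0 \<le> norm01 f"
  by (simp add: norm01_def inner01_self_nonneg)

lemma inner01_self: "inner01 f f = (norm01 f)\<^sup>2"
  by (simp add: norm01_def inner01_self_nonneg)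

lemma norm01_le_iff: "0 \<le> c \<Longrightarrow> norm01 f \<le> c \<longleftrightarrow> inner01 f f \<le> c\<^sup>2"
  unfolding norm01_def using real_le_lsqrt sqrt_le_D by blast

lemma norm01_cong: "(\<And>x. x \<in> {0..1} \<Longrightarrow> f x = g x) \<Longrightarrow> norm01 f = norm01 g"
  unfolding norm01_def using inner01_cong[of f g f g] by simp

lemma norm01_eq_0: "(\<And>x. x \<in> {0..1} \<Longrightarrow> f x = 0) \<Longrightarrow> norm01 f = 0"
  using norm01_cong[of f "\<lambda>x. 0"] by (simp add: norm01_def inner01_def)

lemma norm01_cmult: "norm01 (\<lambda>x. c * f x) = \<bar>c\<bar> * norm01 f"
proof -
  have "inner01 (\<lambda>x. c * f x) (\<lambda>x. c * f x) = c\<^sup>2 * inner01 f f"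
    by (simp add: inner01_cmult_left inner01_cmult_right power2_eq_square)
  then show ?thesis
    by (simp add: norm01_def real_sqrt_mult)
qed

lemma norm01_le_bound:
  assumes "f \<in> borel_measurable lebesgue01" "\<And>x. x \<in> {0..1} \<Longrightarrow> \<bar>f x\<bar> \<le> B"
  shows "norm01 f \<le> B"
proof -
  have B: "0 \<le> B"
    using assms(2)[of 0] by simp
  have "inner01 f f \<le> B\<^sup>2"
    unfolding inner01_def
  proof (rule integral_lebesgue01_le_const)
    have f: "f \<in> L2_01"
      by (rule L2_01_bounded[OF assms])
    show "integrable lebesgue01 (\<lambda>x. f x * f x)"
      by (rule L2_01_integrable_mult[OF f f])
    show "f x * f x \<le> B\<^sup>2" if "x \<in> {0..1}" for x
      using mult_mono[OF assms(2)[OF that] assms(2)[OF that]] B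
      by (simp add: power2_eq_square abs_mult[symmetric])
  qed
  then show ?thesis
    using B norm01_le_iff by blast
qed

lemma inner01_Cauchy_Schwarz:
  assumes "f \<in> L2_01" "g \<in> L2_01"
  shows "\<bar>inner01 f g\<bar> \<le> norm01 f * norm01 g"
proof -
  have quadratic: "0 \<le> inner01 f f + 2 * t * inner01 f g + t\<^sup>2 * inner01 g g" for t
  proof -
    have "inner01 (\<lambda>x. f x + t * g x) (\<lambda>x. f x + t * g x)
        = inner01 f f + 2 * t * inner01 f g + t\<^sup>2 * inner01 g g"
      using assms L2_01_cmult[OF assms(2), of t]
      by (simp add: inner01_add_left inner01_add_right L2_01_add inner01_cmult_left
          inner01_cmult_right inner01_commute[of g f] power2_eq_square algebra_simps)
    then show ?thesis
      using inner01_self_nonneg by metis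
  qed
  have "(inner01 f g)\<^sup>2 \<le> inner01 f f * inner01 g g"
  proof (cases "inner01 g g = 0")
    case True
    \<comment> \<open>otherwise the quadratic, now linear in \<open>t\<close>, would become negative\<close>
    have "inner01 f g = 0"
      using quadratic[of "- (inner01 f f + 1) / (2 * inner01 f g)"] True
      by (cases "inner01 f g = 0") (simp_all add: field_simps)
    then show ?thesis
      using True by simp
  next
    case False
    then have gg: "0 < inner01 g g"
      using inner01_self_nonneg[of g] by simp
    have "0 \<le> inner01 f f - (inner01 f g)\<^sup>2 / inner01 g g"
      using quadratic[of "- inner01 f g / inner01 g g"] gg
      by (simp add: power2_eq_square field_simps)
    then show ?thesis
      using gg by (simp add: field_simps)
  qed
  then have "sqrt ((inner01 f g)\<^sup>2) \<le> sqrt (inner01 f f * inner01 g g)"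
    by (rule real_sqrt_le_mono)
  then show ?thesis
    by (simp add: norm01_def real_sqrt_mult)
qed

lemma inner01_eq_if_norm01_diff_eq_0:
  assumes "f \<in> L2_01" "f' \<in> L2_01" "g \<in> L2_01" "norm01 (\<lambda>x. f x - f' x) = 0"
  shows "inner01 f g = inner01 f' g"
  using inner01_Cauchy_Schwarz[OF L2_01_diff[OF assms(1,2)] assms(3)] assms
  by (simp add: inner01_diff_left)

lemma norm01_triangle:
  assumes "f \<in> L2_01" "g \<in> L2_01"
  shows "norm01 (\<lambda>x. f x + g x) \<le> norm01 f + norm01 g"
proof -
  have "inner01 (\<lambda>x. f x + g x) (\<lambda>x. f x + g x) = inner01 f f + 2 * inner01 f g + inner01 g g"
    using assms by (simp add: inner01_add_left inner01_add_right L2_01_add inner01_commute[of g f])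
  also have "\<dots> \<le> (norm01 f + norm01 g)\<^sup>2"
    using inner01_Cauchy_Schwarz[OF assms] by (simp add: inner01_self power2_sum)
  finally show ?thesis
    using norm01_le_iff[of "norm01 f + norm01 g"] norm01_nonneg[of f] norm01_nonneg[of g] by simp
qed

lemma norm01_triangle_diff:
  assumes "f \<in> L2_01" "g \<in> L2_01" "m \<in> L2_01"
  shows "norm01 (\<lambda>x. f x - g x) \<le> norm01 (\<lambda>x. f x - m x) + norm01 (\<lambda>x. m x - g x)"
  using norm01_triangle[OF L2_01_diff[OF assms(1,3)] L2_01_diff[OF assms(3,2)]] by simp

lemma inner01_self_cmult_diff:
  assumes "f \<in> L2_01" "g \<in> L2_01"
  shows "inner01 (\<lambda>x. a * (f x - c * g x)) (\<lambda>x. a * (f x - c * g x))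
    = a\<^sup>2 * (inner01 f f - 2 * c * inner01 f g + c\<^sup>2 * inner01 g g)"
proof -
  have "inner01 (\<lambda>x. f x - c * g x) (\<lambda>x. f x - c * g x)
      = inner01 f f - 2 * c * inner01 f g + c\<^sup>2 * inner01 g g"
    using assms L2_01_cmult[OF assms(2), of c]
    by (simp add: inner01_diff_left inner01_diff_right L2_01_diff inner01_cmult_left
        inner01_cmult_right inner01_commute[of g f] power2_eq_square algebra_simps)
  then show ?thesis
    by (simp only: inner01_cmult_left inner01_cmult_right) (simp add: power2_eq_square)
qed

lemma norm01_tendsto_0_bounded:
  assumes "\<And>n. f n \<in> borel_measurable lebesgue01"
    and "\<And>n x. x \<in> {0..1} \<Longrightarrow> \<bar>f n x\<bar> \<le> B"
    and "AE x in lebesgue01. (\<lambda>n. f n x) \<longlonglongrightarrow> 0"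
  shows "(\<lambda>n. norm01 (f n)) \<longlonglongrightarrow> 0"
proof -
  have "(\<lambda>n. int01 (\<lambda>x. f n x * f n x)) \<longlonglongrightarrow> int01 (\<lambda>x. 0)"
  proof (rule integral_dominated_convergence[where w="\<lambda>x. B * B"])
    have "\<bar>f n x\<bar> * \<bar>f n x\<bar> \<le> B * B" if "x \<in> {0..1}" for n x
      using assms(2)[OF that, of n] by (intro mult_mono) auto
    then show "AE x in lebesgue01. norm (f n x * f n x) \<le> B * B" for n
      by (intro AE_I2) (simp add: abs_mult)
    show "AE x in lebesgue01. (\<lambda>n. f n x * f n x) \<longlonglongrightarrow> 0"
      using assms(3) by eventually_elim (use tendsto_mult in fastforce)
  qed (use assms(1) integrable_lebesgue01_const in auto)
  from tendsto_real_sqrt[OF this] show ?thesis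
    by (simp add: norm01_def inner01_def)
qed

lemma abs_norm01_diff_le:
  assumes "f \<in> L2_01" "g \<in> L2_01"
  shows "\<bar>norm01 f - norm01 g\<bar> \<le> norm01 (\<lambda>x. f x - g x)"
proof -
  have "norm01 f \<le> norm01 (\<lambda>x. f x - g x) + norm01 g"
    using norm01_triangle[OF L2_01_diff[OF assms] assms(2)] by simp
  moreover have "norm01 g \<le> norm01 (\<lambda>x. g x - f x) + norm01 f"
    using norm01_triangle[OF L2_01_diff[OF assms(2,1)] assms(1)] by simp
  moreover have "norm01 (\<lambda>x. g x - f x) = norm01 (\<lambda>x. f x - g x)"
    using norm01_cmult[of "-1" "\<lambda>x. f x - g x"] by simp
  ultimately show ?thesis
    by linarith
qed

lemma le_norm01_div_sqrt_add:
  assumes v: "v \<in> L2_01" and \<delta>: "0 < \<delta>" "\<delta> \<le> y" "y \<le> 1"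
    and close: "\<And>z. z \<in> {y - \<delta>..y} \<Longrightarrow> v y \<le> \<bar>v z\<bar> + e"
  shows "v y \<le> norm01 v / sqrt \<delta> + e"
proof -
  define ind where "ind = (indicator {y - \<delta>..y} :: real \<Rightarrow> real)"
  have "ind \<in> borel_measurable lebesgue01"
    unfolding ind_def by (rule borel_measurable_lebesgue01) simp
  then have ind: "ind \<in> L2_01"
    by (rule L2_01_bounded[of _ 1]) (simp add: ind_def indicator_def)
  have int_ind: "int01 ind = \<delta>"
    unfolding ind_def using integral_lebesgue01_indicator_Icc[of "y - \<delta>" y] \<delta> by simp
  have "inner01 ind ind = int01 ind"
    unfolding inner01_def by (rule Bochner_Integration.integral_cong) (auto simp: ind_def indicator_def)
  then have norm_ind: "norm01 ind = sqrt \<delta>"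
    by (simp add: norm01_def int_ind)
  \<comment> \<open>average the hypothesis over \<open>[y - \<delta>, y]\<close> and apply Cauchy--Schwarz\<close>
  have "v y * \<delta> = int01 (\<lambda>z. ind z * v y)"
    using int_ind by simp
  also have "\<dots> \<le> int01 (\<lambda>z. ind z * \<bar>v z\<bar> + ind z * e)"
  proof (rule integral_mono)
    show "integrable lebesgue01 (\<lambda>z. ind z * v y)"
      using L2_01_integrable[OF ind] by simp
    show "integrable lebesgue01 (\<lambda>z. ind z * \<bar>v z\<bar> + ind z * e)"
      using L2_01_integrable_mult[OF ind L2_01_abs[OF v]] L2_01_integrable[OF ind] by simp
    show "ind z * v y \<le> ind z * \<bar>v z\<bar> + ind z * e" for z
      using close[of z] by (simp add: ind_def indicator_def)
  qed
  also have "\<dots> = inner01 ind (\<lambda>z. \<bar>v z\<bar>) + \<delta> * e"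
    using L2_01_integrable_mult[OF ind L2_01_abs[OF v]] L2_01_integrable[OF ind] int_ind
    by (simp add: inner01_def)
  also have "\<dots> \<le> sqrt \<delta> * norm01 v + \<delta> * e"
  proof -
    have "norm01 (\<lambda>z. \<bar>v z\<bar>) = norm01 v"
      by (simp add: norm01_def inner01_def)
    then show ?thesis
      using inner01_Cauchy_Schwarz[OF ind L2_01_abs[OF v]] norm_ind by (simp add: abs_le_iff)
  qed
  finally have "(sqrt \<delta>)\<^sup>2 * v y \<le> sqrt \<delta> * norm01 v + (sqrt \<delta>)\<^sup>2 * e"
    using \<delta> by (simp add: mult.commute)
  then have "sqrt \<delta> * (sqrt \<delta> * v y) \<le> sqrt \<delta> * (norm01 v + sqrt \<delta> * e)"
    using \<delta> by (simp add: distrib_left mult.assoc[symmetric])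
  then have "sqrt \<delta> * v y \<le> norm01 v + sqrt \<delta> * e"
    using \<delta> by simp
  then show ?thesis
    using \<delta> by (simp add: field_simps)
qed

section \<open>The kernel and its integral operator\<close>

lemma K_measurable: "(\<lambda>p. K (fst p) (snd p)) \<in> borel_measurable (borel \<Otimes>\<^sub>M borel)"
  unfolding K_def frac_def by measurable

lemma abs_K_le: "\<bar>K x y\<bar> \<le> 1/2"
proof -
  have "\<bar>1/2 - t\<bar> \<le> 1/2" if "0 \<le> t" "t < 1" for t :: real
    using that by arith
  then show ?thesis
    by (simp add: K_def frac_lt_1)
qed

lemma K_commute: "K x y = K y x"
  by (simp add: K_def mult.commute)

lemma K_0_left [simp]: "K 0 y = 0"
  by (simp add: K_def)

lemma K_measurable_right: "(\<lambda>y. K x y) \<in> borel_measurable lebesgue01"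
  using measurable_compose[OF measurable_Pair[OF measurable_const[of x] measurable_ident_sets[OF refl]]
      K_measurable]
  by (simp add: borel_measurable_lebesgue01)

lemma K_measurable_pair:
  "(\<lambda>p. K (fst p) (snd p)) \<in> borel_measurable (lebesgue01 \<Otimes>\<^sub>M lebesgue01)"
proof -
  have "(\<lambda>p. p) \<in> measurable (lebesgue01 \<Otimes>\<^sub>M lebesgue01) (borel \<Otimes>\<^sub>M borel)"
    using borel_measurable_lebesgue01[OF measurable_ident_sets[OF refl]]
    by (intro measurable_pair measurable_compose[OF measurable_fst] measurable_compose[OF measurable_snd])
      auto
  from measurable_compose[OF this K_measurable] show ?thesis .
qed

lemma K_L2_01: "(\<lambda>y. K x y) \<in> L2_01"
  by (rule L2_01_bounded[OF K_measurable_right abs_K_le])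

lemma norm01_K_le: "norm01 (\<lambda>y. K x y) \<le> 1/2"
  by (rule norm01_le_bound[OF K_measurable_right abs_K_le])

lemma K2_eq_inner01: "K2 x z = inner01 (\<lambda>y. K x y) (\<lambda>y. K z y)"
  by (simp add: K2_def inner01_def K_commute[of _ z])

lemma K2_commute: "K2 x y = K2 y x"
  by (simp add: K2_eq_inner01 inner01_commute)

lemma K2_le: "K2 x x \<le> 1/4"
  using norm01_K_le[of x] norm01_le_iff[of "1/2"] by (simp add: K2_eq_inner01 power2_eq_square)

definition Kop :: "(real \<Rightarrow> real) \<Rightarrow> real \<Rightarrow> real" where
  "Kop u x = int01 (\<lambda>y. K x y * u y)"

lemma Kop_eq_inner01: "Kop u x = inner01 (\<lambda>y. K x y) u"
  by (simp add: Kop_def inner01_def)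

lemma abs_Kop_le: "u \<in> L2_01 \<Longrightarrow> \<bar>Kop u x\<bar> \<le> norm01 u / 2"
  using inner01_Cauchy_Schwarz[OF K_L2_01, of u x]
    mult_right_mono[OF norm01_K_le norm01_nonneg, of x u]
  by (simp add: Kop_eq_inner01)

lemma Kop_measurable:
  assumes "u \<in> L2_01"
  shows "Kop u \<in> borel_measurable lebesgue01"
proof -
  have "(\<lambda>p. K (fst p) (snd p) * u (snd p)) \<in> borel_measurable (lebesgue01 \<Otimes>\<^sub>M lebesgue01)"
    by (intro borel_measurable_times K_measurable_pair
        measurable_compose[OF measurable_snd L2_01_measurable[OF assms]])
  then have "(\<lambda>(x, y). K x y * u y) \<in> borel_measurable (lebesgue01 \<Otimes>\<^sub>M lebesgue01)"
    by (simp add: case_prod_beta')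
  from sigma_finite_measure.borel_measurable_lebesgue_integral[OF sigma_finite_lebesgue01 this]
  show ?thesis
    by (simp add: Kop_def[abs_def])
qed

lemma Kop_L2_01: "u \<in> L2_01 \<Longrightarrow> Kop u \<in> L2_01"
  by (rule L2_01_bounded[OF Kop_measurable abs_Kop_le])

lemma integral_abs_K_mult_le:
  assumes u: "u \<in> L2_01"
  shows "(\<integral>y. \<bar>K x y * u y\<bar> \<partial>lebesgue01) \<le> (\<integral>y. \<bar>u y\<bar> \<partial>lebesgue01)"
proof (rule integral_mono)
  show "integrable lebesgue01 (\<lambda>y. \<bar>K x y * u y\<bar>)"
    using L2_01_integrable_mult[OF K_L2_01 u] by auto
  show "integrable lebesgue01 (\<lambda>y. \<bar>u y\<bar>)"
    using L2_01_integrable[OF u] by auto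
  show "\<bar>K x y * u y\<bar> \<le> \<bar>u y\<bar>" for y
    unfolding abs_mult
    using mult_right_mono[OF abs_K_le[of x y] abs_ge_zero[of "u y"]] abs_ge_zero[of "u y"]
    by linarith
qed

lemma integrable_K_mult:
  assumes u: "u \<in> L2_01" and v: "v \<in> L2_01"
  shows "integrable (lebesgue01 \<Otimes>\<^sub>M lebesgue01) (\<lambda>(x, y). K x y * u y * v x)"
proof -
  interpret pair_sigma_finite lebesgue01 lebesgue01
    using finite_measure_lebesgue01 by (simp add: pair_sigma_finite_def finite_measure_def)
  define f where "f x y = K x y * u y * v x" for x y
  have "(\<lambda>p. K (fst p) (snd p) * u (snd p) * v (fst p))
      \<in> borel_measurable (lebesgue01 \<Otimes>\<^sub>M lebesgue01)"
    by (intro borel_measurable_times K_measurable_pair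
        measurable_compose[OF measurable_snd L2_01_measurable[OF u]]
        measurable_compose[OF measurable_fst L2_01_measurable[OF v]])
  then have f_measurable: "case_prod f \<in> borel_measurable (lebesgue01 \<Otimes>\<^sub>M lebesgue01)"
    by (simp add: f_def case_prod_beta')
  have Ku: "integrable lebesgue01 (\<lambda>y. K x y * u y)" for x
    by (rule L2_01_integrable_mult[OF K_L2_01 u])
  have inner_le: "(\<integral>y. norm (f x y) \<partial>lebesgue01) \<le> \<bar>v x\<bar> * (\<integral>y. \<bar>u y\<bar> \<partial>lebesgue01)" for x
    using integral_abs_K_mult_le[OF u, of x] by (simp add: f_def abs_mult mult.commute mult_left_mono)
  have "integrable (lebesgue01 \<Otimes>\<^sub>M lebesgue01) (case_prod f)"
  proof (rule Fubini_integrable[OF f_measurable])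
    have meas: "(\<lambda>x. \<integral>y. norm (f x y) \<partial>lebesgue01) \<in> borel_measurable lebesgue01"
      using sigma_finite_measure.borel_measurable_lebesgue_integral[OF sigma_finite_lebesgue01,
          of "\<lambda>x y. norm (f x y)"]
        measurable_compose[OF f_measurable borel_measurable_norm]
      by (simp add: case_prod_beta' comp_def)
    have dominated: "AE x in lebesgue01. norm (\<integral>y. norm (f x y) \<partial>lebesgue01)
        \<le> norm (\<bar>v x\<bar> * (\<integral>y. \<bar>u y\<bar> \<partial>lebesgue01))"
    proof (rule AE_I2)
      fix x
      have "0 \<le> (\<integral>y. norm (f x y) \<partial>lebesgue01)" "0 \<le> (\<integral>y. \<bar>u y\<bar> \<partial>lebesgue01)"
        by simp_all
      then show "norm (\<integral>y. norm (f x y) \<partial>lebesgue01) \<le> norm (\<bar>v x\<bar> * (\<integral>y. \<bar>u y\<bar> \<partial>lebesgue01))"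
        using inner_le[of x] by (simp add: abs_mult)
    qed
    have "integrable lebesgue01 (\<lambda>x. \<bar>v x\<bar> * (\<integral>y. \<bar>u y\<bar> \<partial>lebesgue01))"
      using L2_01_integrable[OF v] by auto
    from Bochner_Integration.integrable_bound[OF this meas dominated]
    show "integrable lebesgue01 (\<lambda>x. \<integral>y. norm (case_prod f (x, y)) \<partial>lebesgue01)"
      by simp
    show "AE x in lebesgue01. integrable lebesgue01 (\<lambda>y. case_prod f (x, y))"
      using Ku by (simp add: f_def)
  qed
  then show ?thesis
    by (simp add: f_def[abs_def])
qed

lemma Kop_selfadjoint:
  assumes u: "u \<in> L2_01" and v: "v \<in> L2_01"
  shows "inner01 (Kop u) v = inner01 u (Kop v)"
proof -
  interpret pair_sigma_finite lebesgue01 lebesgue01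
    using finite_measure_lebesgue01 by (simp add: pair_sigma_finite_def finite_measure_def)
  have "(\<integral>y. (\<integral>x. K x y * u y * v x \<partial>lebesgue01) \<partial>lebesgue01)
      = (\<integral>x. (\<integral>y. K x y * u y * v x \<partial>lebesgue01) \<partial>lebesgue01)"
    by (rule Fubini_integral[OF integrable_K_mult[OF u v]])
  moreover have "(\<integral>x. (\<integral>y. K x y * u y * v x \<partial>lebesgue01) \<partial>lebesgue01) = inner01 (Kop u) v"
    by (simp add: inner01_def Kop_def)
  moreover have "(\<integral>y. (\<integral>x. K x y * u y * v x \<partial>lebesgue01) \<partial>lebesgue01) = inner01 u (Kop v)"
    by (simp add: inner01_def Kop_def K_commute[of _ "_::real"] mult.commute mult.left_commute)
  ultimately show ?thesis
    by simp
qed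

lemma countable_K_discontinuities:
  assumes "x \<noteq> 0"
  shows "countable {y::real. 1 / (x * y) \<in> \<int>}"
proof -
  have "{y. 1 / (x * y) \<in> \<int>} \<subseteq> range (\<lambda>m::int. 1 / (x * of_int m))"
  proof
    fix y assume "y \<in> {y. 1 / (x * y) \<in> \<int>}"
    then obtain m :: int where m: "1 / (x * y) = of_int m"
      by (auto elim: Ints_cases)
    have "y = 1 / (x * of_int m)"
    proof (cases "y = 0")
      case False
      then have "of_int m \<noteq> (0::real)"
        using m assms by auto
      then show ?thesis
        using m False assms by (simp add: field_simps)
    qed (use m in simp)
    then show "y \<in> range (\<lambda>m::int. 1 / (x * of_int m))"
      by blast
  qed
  then show ?thesis
    by (rule countable_subset) simp
qed

lemma isCont_K_left:
  assumes "x \<noteq> 0" "y \<noteq> 0" "1 / (x * y) \<notin> \<int>"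
  shows "isCont (\<lambda>t. K t y) x"
proof -
  have "isCont (\<lambda>t. 1 / 2 - frac (1 / (t * y))) x"
    using assms continuous_frac[OF assms(3)]
    by (intro continuous_intros continuous_at_compose[of _ "\<lambda>t. 1 / (t * y)" frac, unfolded comp_def])
      auto
  moreover have "\<forall>\<^sub>F t in nhds x. K t y = 1 / 2 - frac (1 / (t * y))"
    using t1_space_nhds[OF assms(1)] by eventually_elim (use assms(2) in \<open>simp add: K_def\<close>)
  ultimately show ?thesis
    using isCont_cong by metis
qed

text \<open>Although \<open>K\<close> is discontinuous, \<open>x \<mapsto> K(x, \<cdot>)\<close> is continuous into $L^2$ away from
  \<open>x = 0\<close>: for fixed \<open>x\<close>, \<open>K(\<cdot>, y)\<close> is continuous at \<open>x\<close> for all but countably many \<open>y\<close>.\<close>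

lemma norm01_K_diff_tendsto_0:
  assumes "x \<noteq> 0" "z \<longlonglongrightarrow> x"
  shows "(\<lambda>n. norm01 (\<lambda>y. K x y - K (z n) y)) \<longlonglongrightarrow> 0"
proof (rule norm01_tendsto_0_bounded)
  show "\<bar>K x y - K (z n) y\<bar> \<le> 1" for n y
    using abs_K_le[of x y] abs_K_le[of "z n" y] by arith
  have "AE y in lebesgue01. y \<notin> insert 0 {y. 1 / (x * y) \<in> \<int>}"
    using countable_K_discontinuities[OF assms(1)] by (intro AE_lebesgue01_notin_countable) simp
  then show "AE y in lebesgue01. (\<lambda>n. K x y - K (z n) y) \<longlonglongrightarrow> 0"
  proof eventually_elim
    case (elim y)
    then have "(\<lambda>n. K (z n) y) \<longlonglongrightarrow> K x y"
      using isCont_tendsto_compose[OF isCont_K_left[OF assms(1)] assms(2)] by auto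
    then show ?case
      using tendsto_diff[OF tendsto_const[of "K x y"]] by fastforce
  qed
qed (intro borel_measurable_diff K_measurable_right)

lemma norm01_K_diff_small:
  assumes "x \<noteq> 0" "e > 0"
  shows "\<exists>d>0. \<forall>z. \<bar>z - x\<bar> < d \<longrightarrow> norm01 (\<lambda>y. K x y - K z y) < e"
proof -
  have "((\<lambda>z. norm01 (\<lambda>y. K x y - K z y)) \<longlongrightarrow> 0) (at x)"
    using norm01_K_diff_tendsto_0[OF assms(1)] by (auto simp: tendsto_at_iff_sequentially comp_def)
  then obtain d where d: "d > 0"
    "\<And>z. z \<noteq> x \<Longrightarrow> \<bar>z - x\<bar> < d \<Longrightarrow> norm01 (\<lambda>y. K x y - K z y) < e"
    using assms(2) norm01_nonneg by (auto simp: tendsto_iff eventually_at dist_real_def)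
  have "norm01 (\<lambda>y. K x y - K z y) < e" if "\<bar>z - x\<bar> < d" for z
    using d(2)[OF _ that] assms(2) by (cases "z = x") (simp_all add: norm01_eq_0)
  then show ?thesis
    using d(1) by blast
qed

lemma abs_K2_diff_le:
  "\<bar>K2 x z - K2 x' z'\<bar> \<le> (norm01 (\<lambda>y. K x y - K x' y) + norm01 (\<lambda>y. K z y - K z' y)) / 2"
proof -
  let ?dx = "\<lambda>y. K x y - K x' y" and ?dz = "\<lambda>y. K z y - K z' y"
  have "K2 x z - K2 x' z' = inner01 ?dx (\<lambda>y. K z y) + inner01 (\<lambda>y. K x' y) ?dz"
    by (simp add: K2_eq_inner01 inner01_diff_left inner01_diff_right K_L2_01)
  then have "\<bar>K2 x z - K2 x' z'\<bar> \<le> \<bar>inner01 ?dx (\<lambda>y. K z y)\<bar> + \<bar>inner01 (\<lambda>y. K x' y) ?dz\<bar>"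
    by (simp only: abs_triangle_ineq)
  moreover have "\<bar>inner01 ?dx (\<lambda>y. K z y)\<bar> \<le> norm01 ?dx * (1/2)"
    using inner01_Cauchy_Schwarz[OF L2_01_diff[OF K_L2_01 K_L2_01] K_L2_01, of x x' z]
      mult_left_mono[OF norm01_K_le[of z] norm01_nonneg[of ?dx]] by linarith
  moreover have "\<bar>inner01 (\<lambda>y. K x' y) ?dz\<bar> \<le> (1/2) * norm01 ?dz"
    using inner01_Cauchy_Schwarz[OF K_L2_01 L2_01_diff[OF K_L2_01 K_L2_01], of x' z z']
      mult_right_mono[OF norm01_K_le[of x'] norm01_nonneg[of ?dz]] by linarith
  ultimately have "\<bar>K2 x z - K2 x' z'\<bar> \<le> norm01 ?dx * (1/2) + (1/2) * norm01 ?dz"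
    by linarith
  then show ?thesis
    by (simp add: add_divide_distrib)
qed

lemma isCont_K2:
  assumes "x \<noteq> 0" "z \<noteq> 0"
  shows "isCont (\<lambda>p. K2 (fst p) (snd p)) (x, z)"
proof (rule continuous_at_sequentiallyI)
  fix p :: "nat \<Rightarrow> real \<times> real" assume "p \<longlonglongrightarrow> (x, z)"
  then have "(\<lambda>n. fst (p n)) \<longlonglongrightarrow> x" "(\<lambda>n. snd (p n)) \<longlonglongrightarrow> z"
    using tendsto_fst tendsto_snd by fastforce+
  from tendsto_add[OF norm01_K_diff_tendsto_0[OF assms(1) this(1)]
      norm01_K_diff_tendsto_0[OF assms(2) this(2)]]
  have bound_lim: "(\<lambda>n. (norm01 (\<lambda>y. K x y - K (fst (p n)) y)
      + norm01 (\<lambda>y. K z y - K (snd (p n)) y)) / 2) \<longlonglongrightarrow> 0"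
    using tendsto_divide_zero by fastforce
  have "\<forall>n. norm (K2 x z - K2 (fst (p n)) (snd (p n)))
      \<le> (norm01 (\<lambda>y. K x y - K (fst (p n)) y) + norm01 (\<lambda>y. K z y - K (snd (p n)) y)) / 2"
    using abs_K2_diff_le by simp
  from Lim_null_comparison[OF always_eventually[OF this] bound_lim]
  show "(\<lambda>n. K2 (fst (p n)) (snd (p n))) \<longlonglongrightarrow> K2 (fst (x, z)) (snd (x, z))"
    using tendsto_diff[OF tendsto_const[of "K2 x z"]] by fastforce
qed

lemma norm01_K_diff_uniformly_small:
  assumes "0 < \<epsilon>" "e > 0"
  obtains d where "d > 0"
    "\<And>y z. y \<in> {\<epsilon>..1} \<Longrightarrow> z \<in> {\<epsilon>..1} \<Longrightarrow> \<bar>y - z\<bar> < d \<Longrightarrow> norm01 (\<lambda>t. K y t - K z t) \<le> e"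
proof -
  define S where "S = {\<epsilon>..1} \<times> {\<epsilon>..(1::real)}"
  have "continuous_on S (\<lambda>p. K2 (fst p) (snd p))"
    using assms(1) by (intro continuous_at_imp_continuous_on ballI) (auto simp: S_def intro!: isCont_K2)
  then have "uniformly_continuous_on S (\<lambda>p. K2 (fst p) (snd p))"
    by (rule compact_uniformly_continuous) (simp add: S_def compact_Times)
  then obtain d where d: "d > 0"
    "\<And>p p'. p \<in> S \<Longrightarrow> p' \<in> S \<Longrightarrow> dist p' p < d \<Longrightarrow> dist (K2 (fst p') (snd p')) (K2 (fst p) (snd p)) < e\<^sup>2 / 2"
    unfolding uniformly_continuous_on_def using assms(2) by (metis half_gt_zero zero_less_power)
  have "norm01 (\<lambda>t. K y t - K z t) \<le> e"
    if yz: "y \<in> {\<epsilon>..1}" "z \<in> {\<epsilon>..1}" "\<bar>y - z\<bar> < d" for y z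
  proof -
    \<comment> \<open>\<open>\<parallel>K(y, \<cdot>) - K(z, \<cdot>)\<parallel>\<^sup>2 = (K\<^sub>2(y, y) - K\<^sub>2(y, z)) + (K\<^sub>2(z, z) - K\<^sub>2(z, y))\<close>\<close>
    have "\<bar>K2 y y - K2 y z\<bar> < e\<^sup>2 / 2" "\<bar>K2 z z - K2 z y\<bar> < e\<^sup>2 / 2"
      using d(2)[of "(y, z)" "(y, y)"] d(2)[of "(z, y)" "(z, z)"] yz
      by (auto simp: S_def dist_Pair_Pair dist_real_def abs_minus_commute)
    then have "K2 y y - K2 y z < e\<^sup>2 / 2" "K2 z z - K2 z y < e\<^sup>2 / 2"
      by (simp_all only: abs_less_iff)
    moreover have "inner01 (\<lambda>t. K y t - K z t) (\<lambda>t. K y t - K z t) = K2 y y - 2 * K2 y z + K2 z z"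
      using inner01_self_cmult_diff[OF K_L2_01 K_L2_01, of 1 y 1 z]
      by (simp add: K2_eq_inner01 K2_commute[of z y])
    ultimately show ?thesis
      using assms(2) K2_commute[of z y] by (intro norm01_le_iff[THEN iffD2]) simp_all
  qed
  with d(1) show ?thesis
    using that by blast
qed

text \<open>Turns an eigenfunction up to null sets into one satisfying the eigen-equation at every point,
  as \<^const>\<open>eigenfun\<close> demands.\<close>

lemma eigenfun_Kop_div:
  assumes h: "h \<in> L2_01" and h_pos: "norm01 h > 0" and mu: "mu \<noteq> 0"
    and ev: "norm01 (\<lambda>x. Kop h x - mu * h x) = 0"
  shows "eigenfun (\<lambda>x. Kop h x / mu) (1 / mu)"
    and "\<And>g. g \<in> L2_01 \<Longrightarrow> inner01 (\<lambda>x. Kop h x / mu) g = inner01 h g"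
proof -
  define psi where "psi x = Kop h x / mu" for x
  have psi: "psi \<in> L2_01"
    using L2_01_cmult[OF Kop_L2_01[OF h], of "1 / mu"] by (simp add: psi_def[abs_def])
  have "norm01 (\<lambda>x. psi x - h x) = norm01 (\<lambda>x. (1 / mu) * (Kop h x - mu * h x))"
    using mu by (intro norm01_cong) (simp add: psi_def field_simps)
  then have "norm01 (\<lambda>x. psi x - h x) = 0"
    using ev by (simp only: norm01_cmult mult_zero_right)
  then have inner_psi: "inner01 psi g = inner01 h g" if "g \<in> L2_01" for g
    by (rule inner01_eq_if_norm01_diff_eq_0[OF psi h that])
  then show "inner01 (\<lambda>x. Kop h x / mu) g = inner01 h g" if "g \<in> L2_01" for g
    using that by (simp add: psi_def[abs_def])
  have Kop_psi: "Kop psi x = Kop h x" for x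
    using inner_psi[OF K_L2_01, of x] inner01_commute by (metis Kop_eq_inner01)
  have "norm01 psi = norm01 h"
    unfolding norm01_def using inner_psi[OF psi] inner_psi[OF h] inner01_commute by metis
  have "eigenfun psi (1 / mu)"
    unfolding eigenfun_def
  proof (intro conjI ballI)
    show "psi \<in> L2_01" "norm01 psi > 0"
      using psi h_pos \<open>norm01 psi = norm01 h\<close> by simp_all
    show "psi x = 1 / mu * int01 (\<lambda>y. K x y * psi y)" for x
      using Kop_psi[of x] by (simp add: psi_def Kop_def)
  qed
  then show "eigenfun (\<lambda>x. Kop h x / mu) (1 / mu)"
    by (simp add: psi_def[abs_def])
qed

section \<open>Orthonormal eigenfunctions and the tail kernels\<close>

locale eigensystem =
  fixes phi :: "nat \<Rightarrow> real \<Rightarrow> real" and lam :: "nat \<Rightarrow> real"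
  assumes max_eigen_system: "max_eigen_system phi lam"
begin

lemma eigenfun_phi: "eigenfun (phi j) (lam j)" and lam_nonzero: "lam j \<noteq> 0"
  using max_eigen_system by (auto simp: max_eigen_system_def)

lemma phi_L2_01: "phi j \<in> L2_01"
  using eigenfun_phi by (simp add: eigenfun_def)

lemma inner01_phi_phi: "inner01 (phi i) (phi j) = (if i = j then 1 else 0)"
  using max_eigen_system by (simp add: max_eigen_system_def)

lemma eigenfun_not_orthogonal: "eigenfun psi mu \<Longrightarrow> mu \<noteq> 0 \<Longrightarrow> \<exists>j. inner01 psi (phi j) \<noteq> 0"
  using max_eigen_system by (auto simp: max_eigen_system_def)

lemma abs_lam_mono: "i \<le> j \<Longrightarrow> \<bar>lam i\<bar> \<le> \<bar>lam j\<bar>"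
  using max_eigen_system incseq_SucI[of "\<lambda>j. \<bar>lam j\<bar>"]
  by (auto simp: max_eigen_system_def incseq_def)

text \<open>\<open>Kcoeff j x\<close> is the Fourier coefficient of \<open>K(x, \<cdot>)\<close> with respect to \<open>phi j\<close>.\<close>

definition Kcoeff :: "nat \<Rightarrow> real \<Rightarrow> real" where
  "Kcoeff j x = phi j x / lam j"

lemma phi_eq_lam_Kop: "x \<in> {0..1} \<Longrightarrow> phi j x = lam j * Kop (phi j) x"
  using eigenfun_phi by (simp add: eigenfun_def Kop_def)

lemma Kop_phi: "x \<in> {0..1} \<Longrightarrow> Kop (phi j) x = Kcoeff j x"
  using phi_eq_lam_Kop[of x j] lam_nonzero[of j] by (simp add: Kcoeff_def)

lemma inner01_K_phi: "x \<in> {0..1} \<Longrightarrow> inner01 (\<lambda>y. K x y) (phi j) = Kcoeff j x"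
  using Kop_phi by (simp add: Kop_eq_inner01)

lemma Kcoeff_0 [simp]: "Kcoeff j 0 = 0"
  using phi_eq_lam_Kop[of 0 j] by (simp add: Kcoeff_def Kop_def)

lemma Kcoeff_eq_cmult: "Kcoeff j = (\<lambda>x. (1 / lam j) * phi j x)"
  by (simp add: Kcoeff_def[abs_def])

lemma Kcoeff_L2_01: "Kcoeff j \<in> L2_01"
  unfolding Kcoeff_eq_cmult by (rule L2_01_cmult[OF phi_L2_01])

lemma inner01_Kcoeff_self: "inner01 (Kcoeff j) (Kcoeff j) = 1 / (lam j)\<^sup>2"
  unfolding Kcoeff_eq_cmult inner01_cmult_left inner01_cmult_right
  by (simp add: inner01_phi_phi power2_eq_square)

definition proj_residual :: "nat \<Rightarrow> (real \<Rightarrow> real) \<Rightarrow> real \<Rightarrow> real" where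
  "proj_residual N f = (\<lambda>z. f z - (\<Sum>j<N. inner01 f (phi j) * phi j z))"

lemma L2_01_phi_sum: "(\<lambda>z. \<Sum>j<N. c j * phi j z) \<in> L2_01"
  by (intro L2_01_sum L2_01_cmult phi_L2_01)

lemma proj_residual_L2_01: "f \<in> L2_01 \<Longrightarrow> proj_residual N f \<in> L2_01"
  unfolding proj_residual_def by (intro L2_01_diff L2_01_phi_sum)

lemma inner01_phi_sum_left:
  "g \<in> L2_01 \<Longrightarrow> inner01 (\<lambda>z. \<Sum>j<N. c j * phi j z) g = (\<Sum>j<N. c j * inner01 (phi j) g)"
  by (subst inner01_sum_left) (auto intro: L2_01_cmult phi_L2_01 simp: inner01_cmult_left)

lemma sum_inner01_phi: "(\<Sum>j<N. c j * inner01 (phi j) (phi i)) = (if i < N then c i else 0)"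
  by (simp add: inner01_phi_phi if_distrib[of "\<lambda>t. c _ * t"] sum.delta' cong: if_cong)

lemma inner01_proj_residual:
  "f \<in> L2_01 \<Longrightarrow> g \<in> L2_01 \<Longrightarrow>
    inner01 (proj_residual N f) g = inner01 f g - (\<Sum>j<N. inner01 f (phi j) * inner01 (phi j) g)"
  unfolding proj_residual_def by (simp add: inner01_diff_left L2_01_phi_sum inner01_phi_sum_left)

lemma inner01_proj_residual_phi:
  "f \<in> L2_01 \<Longrightarrow> i < N \<Longrightarrow> inner01 (proj_residual N f) (phi i) = 0"
  by (simp add: inner01_proj_residual phi_L2_01 sum_inner01_phi)

lemma inner01_proj_residual_self:
  assumes f: "f \<in> L2_01"
  shows "inner01 (proj_residual N f) (proj_residual N f) = inner01 f f - (\<Sum>j<N. (inner01 f (phi j))\<^sup>2)"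
proof -
  have "inner01 (phi j) (proj_residual N f) = 0" if "j < N" for j
    using inner01_proj_residual_phi[OF f that] inner01_commute by metis
  then have "inner01 (proj_residual N f) (proj_residual N f) = inner01 f (proj_residual N f)"
    using inner01_proj_residual[OF f proj_residual_L2_01[OF f]] by simp
  also have "\<dots> = inner01 f f - (\<Sum>j<N. (inner01 f (phi j))\<^sup>2)"
    using inner01_proj_residual[OF f f] inner01_commute[of f "proj_residual N f"]
      inner01_commute[of f "phi _"]
    by (simp add: power2_eq_square)
  finally show ?thesis .
qed

lemma inner01_proj_residual_self_le:
  "f \<in> L2_01 \<Longrightarrow> inner01 (proj_residual N f) (proj_residual N f) \<le> inner01 f f"
  by (simp add: inner01_proj_residual_self sum_nonneg)

definition K_tail :: "nat \<Rightarrow> real \<Rightarrow> real \<Rightarrow> real" where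
  "K_tail N x = (\<lambda>z. K x z - (\<Sum>j<N. Kcoeff j x * phi j z))"

lemma K_tail_eq_proj_residual: "x \<in> {0..1} \<Longrightarrow> K_tail N x = proj_residual N (\<lambda>y. K x y)"
  by (simp add: K_tail_def proj_residual_def inner01_K_phi)

lemma K_tail_L2_01: "K_tail N x \<in> L2_01"
  unfolding K_tail_def by (intro L2_01_diff L2_01_phi_sum K_L2_01)

lemma K_tail_0 [simp]: "K_tail N 0 = (\<lambda>z. 0)"
  by (simp add: K_tail_def)

lemma inner01_phi_K_tail: "y \<in> {0..1} \<Longrightarrow> j < N \<Longrightarrow> inner01 (phi j) (K_tail N y) = 0"
  using inner01_proj_residual_phi[OF K_L2_01] inner01_commute K_tail_eq_proj_residual by metis

lemma inner01_K_tail: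
  assumes x: "x \<in> {0..1}" and y: "y \<in> {0..1}"
  shows "inner01 (K_tail N x) (K_tail N y) = K2 x y - (\<Sum>j<N. Kcoeff j x * Kcoeff j y)"
proof -
  have "inner01 (K_tail N x) (K_tail N y)
      = inner01 (\<lambda>z. K x z) (K_tail N y)
        - (\<Sum>j<N. inner01 (\<lambda>z. K x z) (phi j) * inner01 (phi j) (K_tail N y))"
    unfolding K_tail_eq_proj_residual[OF x] by (rule inner01_proj_residual[OF K_L2_01 K_tail_L2_01])
  also have "(\<Sum>j<N. inner01 (\<lambda>z. K x z) (phi j) * inner01 (phi j) (K_tail N y)) = 0"
    using inner01_phi_K_tail[OF y] by (intro sum.neutral) simp
  also have "inner01 (\<lambda>z. K x z) (K_tail N y) = inner01 (proj_residual N (\<lambda>z. K y z)) (\<lambda>z. K x z)"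
    by (simp add: K_tail_eq_proj_residual[OF y] inner01_commute)
  also have "\<dots> = K2 y x - (\<Sum>j<N. Kcoeff j y * Kcoeff j x)"
    using inner01_proj_residual[OF K_L2_01[of y] K_L2_01[of x], of N] inner01_K_phi[OF y]
      inner01_K_phi[OF x] inner01_commute[of "phi _" "\<lambda>z. K x z"]
    by (simp add: K2_eq_inner01)
  finally show ?thesis
    by (simp add: K2_commute[of y x] mult.commute)
qed

lemma sum_Kcoeff_square_le: "x \<in> {0..1} \<Longrightarrow> (\<Sum>j<N. (Kcoeff j x)\<^sup>2) \<le> K2 x x"
  using inner01_K_tail[of x x N] inner01_self_nonneg[of "K_tail N x"] by (simp add: power2_eq_square)

lemma norm01_K_tail_le:
  assumes "x \<in> {0..1}"
  shows "norm01 (K_tail N x) \<le> 1/2"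
proof (rule norm01_le_iff[THEN iffD2])
  have "inner01 (K_tail N x) (K_tail N x) \<le> K2 x x"
    using inner01_K_tail[OF assms assms, of N] by (simp add: sum_nonneg)
  then show "inner01 (K_tail N x) (K_tail N x) \<le> (1/2)\<^sup>2"
    using K2_le[of x] by (simp add: power2_eq_square)
qed simp

lemma norm01_K_tail_diff_le:
  assumes x: "x \<in> {0..1}" and z: "z \<in> {0..1}"
  shows "norm01 (\<lambda>y. K_tail N x y - K_tail N z y) \<le> norm01 (\<lambda>y. K x y - K z y)"
proof -
  let ?f = "\<lambda>y. K x y - K z y"
  have "inner01 ?f (phi j) = Kcoeff j x - Kcoeff j z" for j
    using inner01_diff_left[OF K_L2_01 K_L2_01 phi_L2_01] inner01_K_phi[OF x] inner01_K_phi[OF z]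
    by simp
  then have "(\<lambda>y. K_tail N x y - K_tail N z y) = proj_residual N ?f"
    by (auto simp: K_tail_def proj_residual_def left_diff_distrib sum_subtractf)
  then show ?thesis
    using inner01_proj_residual_self_le[OF L2_01_diff[OF K_L2_01 K_L2_01], of N x z]
    by (simp add: norm01_def)
qed

text \<open>\<open>Kop_tail N = Kop \<circ> (I - P\<^sub>N)\<close>, where \<open>P\<^sub>N\<close> is the orthogonal projection onto the span of
  \<open>phi 0, \<dots>, phi (N - 1)\<close>; its kernel is \<open>K_tail N\<close>.\<close>

definition Kop_tail :: "nat \<Rightarrow> (real \<Rightarrow> real) \<Rightarrow> real \<Rightarrow> real" where
  "Kop_tail N u x = Kop u x - (\<Sum>j<N. Kcoeff j x * inner01 (phi j) u)"

lemma Kop_tail_eq_inner01: "x \<in> {0..1} \<Longrightarrow> u \<in> L2_01 \<Longrightarrow> Kop_tail N u x = inner01 (K_tail N x) u"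
  using inner01_proj_residual[OF K_L2_01, of u N x]
  by (simp add: Kop_tail_def K_tail_eq_proj_residual Kop_eq_inner01 inner01_K_phi)

lemma Kop_tail_0 [simp]: "Kop_tail N u 0 = 0"
  by (simp add: Kop_tail_def Kop_def)

lemma Kop_tail_measurable: "u \<in> L2_01 \<Longrightarrow> Kop_tail N u \<in> borel_measurable lebesgue01"
  unfolding Kop_tail_def[abs_def]
  by (intro borel_measurable_diff Kop_measurable borel_measurable_sum borel_measurable_times
      L2_01_measurable[OF Kcoeff_L2_01] borel_measurable_const)

lemma abs_Kop_tail_le: "x \<in> {0..1} \<Longrightarrow> u \<in> L2_01 \<Longrightarrow> \<bar>Kop_tail N u x\<bar> \<le> norm01 u / 2"
  using inner01_Cauchy_Schwarz[OF K_tail_L2_01, of u N x]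
    mult_right_mono[OF norm01_K_tail_le norm01_nonneg, of x N u]
  by (simp add: Kop_tail_eq_inner01)

lemma Kop_tail_L2_01: "u \<in> L2_01 \<Longrightarrow> Kop_tail N u \<in> L2_01"
  by (rule L2_01_bounded[OF Kop_tail_measurable abs_Kop_tail_le])

lemma norm01_Kop_tail_le: "u \<in> L2_01 \<Longrightarrow> norm01 (Kop_tail N u) \<le> norm01 u / 2"
  by (rule norm01_le_bound[OF Kop_tail_measurable abs_Kop_tail_le])

lemma Kop_tail_add:
  "u \<in> L2_01 \<Longrightarrow> v \<in> L2_01 \<Longrightarrow> Kop_tail N (\<lambda>y. u y + v y) x = Kop_tail N u x + Kop_tail N v x"
  by (simp add: Kop_tail_def Kop_eq_inner01 inner01_add_right K_L2_01 phi_L2_01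
      distrib_left sum.distrib)

lemma Kop_tail_diff:
  "u \<in> L2_01 \<Longrightarrow> v \<in> L2_01 \<Longrightarrow> Kop_tail N (\<lambda>y. u y - v y) x = Kop_tail N u x - Kop_tail N v x"
  by (simp add: Kop_tail_def Kop_eq_inner01 inner01_diff_right K_L2_01 phi_L2_01
      right_diff_distrib sum_subtractf)

lemma Kop_tail_cmult: "Kop_tail N (\<lambda>y. c * u y) x = c * Kop_tail N u x"
  by (simp add: Kop_tail_def Kop_eq_inner01 inner01_cmult_right right_diff_distrib
      sum_distrib_left mult.left_commute)

lemma Kop_tail_phi: "x \<in> {0..1} \<Longrightarrow> Kop_tail N (phi i) x = (if i < N then 0 else Kcoeff i x)"
  by (simp add: Kop_tail_def Kop_phi sum_inner01_phi[of "\<lambda>j. Kcoeff j x"])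

lemma abs_Kop_tail_diff_le:
  assumes x: "x \<in> {0..1}" and z: "z \<in> {0..1}" and u: "u \<in> L2_01"
  shows "\<bar>Kop_tail N u x - Kop_tail N u z\<bar> \<le> norm01 (\<lambda>y. K x y - K z y) * norm01 u"
proof -
  have "Kop_tail N u x - Kop_tail N u z = inner01 (\<lambda>y. K_tail N x y - K_tail N z y) u"
    using Kop_tail_eq_inner01[OF x u] Kop_tail_eq_inner01[OF z u]
      inner01_diff_left[OF K_tail_L2_01 K_tail_L2_01 u]
    by simp
  then show ?thesis
    using inner01_Cauchy_Schwarz[OF L2_01_diff[OF K_tail_L2_01 K_tail_L2_01] u, of N x N z]
      mult_right_mono[OF norm01_K_tail_diff_le[OF x z] norm01_nonneg, of N u]
    by simp
qed

lemma Kop_tail_selfadjoint: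
  assumes u: "u \<in> L2_01" and v: "v \<in> L2_01"
  shows "inner01 (Kop_tail N u) v = inner01 u (Kop_tail N v)"
proof -
  have sum_L2: "(\<lambda>x. \<Sum>j<N. Kcoeff j x * c j) \<in> L2_01" for c
    by (intro L2_01_sum) (simp add: mult.commute L2_01_cmult[OF Kcoeff_L2_01])
  have inner_sum: "inner01 (\<lambda>x. \<Sum>j<N. Kcoeff j x * c j) w = (\<Sum>j<N. c j * inner01 (phi j) w / lam j)"
    if w: "w \<in> L2_01" for c w
  proof -
    have "inner01 (\<lambda>x. \<Sum>j<N. Kcoeff j x * c j) w = (\<Sum>j<N. inner01 (\<lambda>x. Kcoeff j x * c j) w)"
      by (rule inner01_sum_left) (auto intro: w L2_01_cmult[OF Kcoeff_L2_01] simp: mult.commute)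
    also have "\<dots> = (\<Sum>j<N. c j * inner01 (phi j) w / lam j)"
    proof (intro sum.cong refl)
      fix j
      have "(\<lambda>x. Kcoeff j x * c j) = (\<lambda>x. (c j / lam j) * phi j x)"
        by (auto simp: Kcoeff_def)
      then show "inner01 (\<lambda>x. Kcoeff j x * c j) w = c j * inner01 (phi j) w / lam j"
        using inner01_cmult_left[of "c j / lam j" "phi j" w] by simp
    qed
    finally show ?thesis .
  qed
  have "inner01 (Kop_tail N u) v
      = inner01 (Kop u) v - (\<Sum>j<N. inner01 (phi j) u * inner01 (phi j) v / lam j)"
    unfolding Kop_tail_def[abs_def] by (simp add: inner01_diff_left Kop_L2_01 u v sum_L2 inner_sum)
  moreover have "inner01 u (Kop_tail N v)
      = inner01 (Kop v) u - (\<Sum>j<N. inner01 (phi j) v * inner01 (phi j) u / lam j)"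
    unfolding Kop_tail_def[abs_def] inner01_commute[of u]
    by (simp add: inner01_diff_left Kop_L2_01 u v sum_L2 inner_sum)
  ultimately show ?thesis
    using Kop_selfadjoint[OF u v] inner01_commute[of "Kop v" u] by (simp add: mult.commute)
qed

section \<open>The norm of the tail operator\<close>

lemma Kop_tail_eq_Kop: "(\<And>j. j < N \<Longrightarrow> inner01 h (phi j) = 0) \<Longrightarrow> Kop_tail N h x = Kop h x"
  unfolding Kop_tail_def using inner01_commute by (simp add: sum.neutral)

text \<open>An eigenfunction of \<open>Kop_tail N\<close> with eigenvalue \<open>mu \<noteq> 0\<close> is orthogonal to
  \<open>phi 0, \<dots>, phi (N - 1)\<close>, hence an eigenfunction of \<open>K\<close>; by maximality it is not orthogonal
  to some \<open>phi j\<close>, which forces \<open>j \<ge> N\<close> and \<open>mu = 1 / lam j\<close>.\<close>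

lemma abs_eigenvalue_Kop_tail_le:
  assumes h: "h \<in> L2_01" and h_pos: "norm01 h > 0" and mu: "mu \<noteq> 0"
    and ev: "norm01 (\<lambda>x. Kop_tail N h x - mu * h x) = 0"
  shows "\<bar>mu\<bar> \<le> 1 / \<bar>lam N\<bar>"
proof -
  have "inner01 (Kop_tail N h) g = mu * inner01 h g" if "g \<in> L2_01" for g
    using inner01_eq_if_norm01_diff_eq_0[OF Kop_tail_L2_01[OF h] L2_01_cmult[OF h] that ev]
    by (simp add: inner01_cmult_left)
  then have inner_Kop_tail: "inner01 h (Kop_tail N (phi j)) = mu * inner01 h (phi j)" for j
    using Kop_tail_selfadjoint[OF h phi_L2_01] phi_L2_01 by metis
  have orthogonal: "inner01 h (phi j) = 0" if "j < N" for j
  proof -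
    have "inner01 h (Kop_tail N (phi j)) = inner01 h (\<lambda>x. 0)"
      by (rule inner01_cong) (use that in \<open>simp_all add: Kop_tail_phi\<close>)
    then show ?thesis
      using inner_Kop_tail[of j] mu by (simp add: inner01_def)
  qed
  then have Kop_ev: "norm01 (\<lambda>x. Kop h x - mu * h x) = 0"
    using ev Kop_tail_eq_Kop[OF orthogonal] by simp
  have "\<exists>j. inner01 (\<lambda>x. Kop h x / mu) (phi j) \<noteq> 0"
    using eigenfun_not_orthogonal[OF eigenfun_Kop_div(1)[OF h h_pos mu Kop_ev]] mu by simp
  then obtain j where j: "inner01 h (phi j) \<noteq> 0"
    using eigenfun_Kop_div(2)[OF h h_pos mu Kop_ev phi_L2_01] by auto
  then have "N \<le> j"
    using orthogonal not_le by blast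
  have "inner01 h (Kop_tail N (phi j)) = inner01 h (\<lambda>x. (1 / lam j) * phi j x)"
    by (rule inner01_cong) (use \<open>N \<le> j\<close> in \<open>simp_all add: Kop_tail_phi Kcoeff_def\<close>)
  then have "mu * inner01 h (phi j) = (1 / lam j) * inner01 h (phi j)"
    using inner_Kop_tail[of j] by (metis inner01_cmult_right)
  then have "mu = 1 / lam j"
    using j by (metis mult_right_cancel)
  with abs_lam_mono[OF \<open>N \<le> j\<close>] lam_nonzero[of N] show ?thesis
    by (simp add: abs_divide frac_le)
qed

lemma eigenvalue_Kop_tail_square_le:
  assumes h: "h \<in> L2_01" and h_pos: "norm01 h > 0" and q: "q > 0"
    and ev: "\<And>x. x \<in> {0..1} \<Longrightarrow> Kop_tail N (Kop_tail N h) x = q\<^sup>2 * h x"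
  shows "q \<le> 1 / \<bar>lam N\<bar>"
proof -
  \<comment> \<open>\<open>T\<^sup>2 h = q\<^sup>2 h\<close> factors as \<open>(T - q)(T + q) h = 0\<close>\<close>
  define psi where "psi x = Kop_tail N h x + q * h x" for x
  have psi: "psi \<in> L2_01"
    unfolding psi_def by (intro L2_01_add Kop_tail_L2_01 L2_01_cmult h)
  have "Kop_tail N psi x - q * psi x = 0" if "x \<in> {0..1}" for x
    using ev[OF that] h
    by (simp add: psi_def[abs_def] Kop_tail_add Kop_tail_L2_01 L2_01_cmult Kop_tail_cmult
        power2_eq_square algebra_simps)
  then have psi_ev: "norm01 (\<lambda>x. Kop_tail N psi x - q * psi x) = 0"
    by (rule norm01_eq_0)
  show ?thesis
  proof (cases "norm01 psi = 0")
    case False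
    then show ?thesis
      using abs_eigenvalue_Kop_tail_le[OF psi _ _ psi_ev] norm01_nonneg[of psi] q by simp
  next
    case True
    then have "norm01 (\<lambda>x. Kop_tail N h x - (- q) * h x) = 0"
      by (simp add: psi_def[abs_def])
    from abs_eigenvalue_Kop_tail_le[OF h h_pos _ this] q show ?thesis
      by simp
  qed
qed

text \<open>Compactness of \<open>Kop_tail N\<close>: the images of a bounded sequence are uniformly bounded and
  equicontinuous away from \<open>0\<close>, so a subsequence converges pointwise, and hence in $L^2$.\<close>

lemma Kop_tail_compact:
  fixes G :: "nat \<Rightarrow> real \<Rightarrow> real"
  assumes G: "\<And>k. G k \<in> L2_01" "\<And>k. norm01 (G k) \<le> 1"
  obtains s h where "strict_mono s" "h \<in> L2_01"
    "\<And>x. x \<in> {0..1} \<Longrightarrow> (\<lambda>i. Kop_tail N (G (s i)) x) \<longlonglongrightarrow> h x"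
    "(\<lambda>i. norm01 (\<lambda>x. Kop_tail N (G (s i)) x - h x)) \<longlonglongrightarrow> 0"
proof -
  define F where "F k = Kop_tail N (G k)" for k
  have F_L2: "F k \<in> L2_01" for k
    unfolding F_def by (rule Kop_tail_L2_01[OF G(1)])
  have F_bounded: "\<bar>F k x\<bar> \<le> 1/2" if "x \<in> {0..1}" for k x
    using abs_Kop_tail_le[OF that G(1)[of k], of N] G(2)[of k] unfolding F_def by linarith
  define F' where "F' k x = (if x \<in> {0..1} then F k x else 0)" for k x
  have "\<exists>s. strict_mono s \<and> (\<forall>x\<in>{0..1}. convergent (\<lambda>i. F' (s i) x))"
  proof (rule pointwise_convergent_subseq[where B="1/2" and W="\<lambda>x z. norm01 (\<lambda>y. K x y - K z y)"])
    show "\<bar>F' k x\<bar> \<le> 1/2" for k x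
      using F_bounded by (simp add: F'_def)
    show "F' k 0 = 0" for k
      by (simp add: F'_def F_def)
    show "\<bar>F' k x - F' k z\<bar> \<le> norm01 (\<lambda>y. K x y - K z y)" if "x \<in> {0..1}" "z \<in> {0..1}" for k x z
      using abs_Kop_tail_diff_le[OF that G(1)[of k], of N]
        mult_left_mono[OF G(2)[of k] norm01_nonneg[of "\<lambda>y. K x y - K z y"]] that
      by (simp add: F'_def F_def)
    show "\<exists>d>0. \<forall>z. \<bar>z - x\<bar> < d \<longrightarrow> norm01 (\<lambda>y. K x y - K z y) < e"
      if "x \<in> {0<..1}" "e > 0" for x e
      using norm01_K_diff_small[of x e] that by auto
  qed
  then obtain s where s: "strict_mono s" and "\<And>x. x \<in> {0..1} \<Longrightarrow> convergent (\<lambda>i. F (s i) x)"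
    by (auto simp: F'_def)
  then have F_lim: "(\<lambda>i. F (s i) x) \<longlonglongrightarrow> lim (\<lambda>i. F (s i) x)" if "x \<in> {0..1}" for x
    using that by (simp add: convergent_LIMSEQ_iff)
  define h where "h x = lim (\<lambda>i. F (s i) x)" for x
  have h_lim: "(\<lambda>i. F (s i) x) \<longlonglongrightarrow> h x" if "x \<in> {0..1}" for x
    unfolding h_def by (rule F_lim[OF that])
  have h_bounded: "\<bar>h x\<bar> \<le> 1/2" if "x \<in> {0..1}" for x
    using F_bounded[OF that] by (intro LIMSEQ_le_const2[OF tendsto_rabs[OF h_lim[OF that]]]) auto
  have h_measurable: "h \<in> borel_measurable lebesgue01"
    by (rule borel_measurable_LIMSEQ_real[where u="\<lambda>i. F (s i)"])
      (auto intro: L2_01_measurable[OF F_L2] h_lim)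
  have L2_lim: "(\<lambda>i. norm01 (\<lambda>x. F (s i) x - h x)) \<longlonglongrightarrow> 0"
  proof (rule norm01_tendsto_0_bounded)
    show "\<bar>F (s i) x - h x\<bar> \<le> 1" if "x \<in> {0..1}" for i x
      using F_bounded[OF that, of "s i"] h_bounded[OF that] by arith
    show "AE x in lebesgue01. (\<lambda>i. F (s i) x - h x) \<longlonglongrightarrow> 0"
      using h_lim by (intro AE_I2) (auto intro: LIM_zero)
  qed (intro borel_measurable_diff L2_01_measurable[OF F_L2] h_measurable)
  have h_L2: "h \<in> L2_01"
    by (rule L2_01_bounded[OF h_measurable h_bounded])
  show ?thesis
    by (rule that[OF s h_L2 h_lim[unfolded F_def] L2_lim[unfolded F_def]])
qed

lemma abs_Kop_tail_square_diff_le: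
  assumes x: "x \<in> {0..1}" and g: "g \<in> L2_01" and h: "h \<in> L2_01"
  shows "\<bar>c * Kop_tail N g x - Kop_tail N (Kop_tail N h) x\<bar>
    \<le> (norm01 (\<lambda>y. Kop_tail N (Kop_tail N g) y - c * g y) + norm01 (\<lambda>y. Kop_tail N g y - h y) / 2) / 2"
proof -
  \<comment> \<open>\<open>c T g - T\<^sup>2 h = T (c g - T\<^sup>2 g) + T (T (g - h))\<close>, and \<open>T\<close> turns $L^2$ bounds into pointwise ones\<close>
  have "c * Kop_tail N g x - Kop_tail N (Kop_tail N h) x = Kop_tail N (\<lambda>y. c * g y - Kop_tail N h y) x"
    using g Kop_tail_L2_01[OF h] by (simp add: Kop_tail_diff L2_01_cmult Kop_tail_cmult)
  then have "\<bar>c * Kop_tail N g x - Kop_tail N (Kop_tail N h) x\<bar> \<le> norm01 (\<lambda>y. c * g y - Kop_tail N h y) / 2"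
    using abs_Kop_tail_le[OF x L2_01_diff[OF L2_01_cmult[OF g] Kop_tail_L2_01[OF h]]] by simp
  also have "norm01 (\<lambda>y. c * g y - Kop_tail N h y)
      \<le> norm01 (\<lambda>y. c * g y - Kop_tail N (Kop_tail N g) y)
        + norm01 (\<lambda>y. Kop_tail N (Kop_tail N g) y - Kop_tail N h y)"
    by (intro norm01_triangle_diff L2_01_cmult g Kop_tail_L2_01 h)
  also have "norm01 (\<lambda>y. c * g y - Kop_tail N (Kop_tail N g) y)
      = norm01 (\<lambda>y. Kop_tail N (Kop_tail N g) y - c * g y)"
    using norm01_cmult[of "-1" "\<lambda>y. Kop_tail N (Kop_tail N g) y - c * g y"] by simp
  also have "norm01 (\<lambda>y. Kop_tail N (Kop_tail N g) y - Kop_tail N h y) \<le> norm01 (\<lambda>y. Kop_tail N g y - h y) / 2"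
    using norm01_Kop_tail_le[OF L2_01_diff[OF Kop_tail_L2_01[OF g] h], of N]
      Kop_tail_diff[OF Kop_tail_L2_01[OF g] h, of N, symmetric]
    by (simp add: fun_eq_iff[symmetric])
  finally show ?thesis
    by simp
qed

lemma Kop_tail_approx_eigen_imp_eigen:
  fixes G :: "nat \<Rightarrow> real \<Rightarrow> real"
  assumes G: "\<And>k. G k \<in> L2_01" "\<And>k. norm01 (G k) \<le> 1" and q: "q > 0"
    and approx_eigen: "(\<lambda>k. norm01 (\<lambda>x. Kop_tail N (Kop_tail N (G k)) x - q\<^sup>2 * G k x)) \<longlonglongrightarrow> 0"
    and norm_lim: "(\<lambda>k. norm01 (Kop_tail N (G k))) \<longlonglongrightarrow> q"
  obtains h where "h \<in> L2_01" "norm01 h > 0" "\<And>x. x \<in> {0..1} \<Longrightarrow> Kop_tail N (Kop_tail N h) x = q\<^sup>2 * h x"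
proof -
  obtain s h where s: "strict_mono s" and h: "h \<in> L2_01"
    and F_lim: "\<And>x. x \<in> {0..1} \<Longrightarrow> (\<lambda>i. Kop_tail N (G (s i)) x) \<longlonglongrightarrow> h x"
    and F_L2_lim: "(\<lambda>i. norm01 (\<lambda>x. Kop_tail N (G (s i)) x - h x)) \<longlonglongrightarrow> 0"
    by (rule Kop_tail_compact[where G=G and N=N, OF G]) blast
  define F where "F i = Kop_tail N (G (s i))" for i
  have F_L2: "F i \<in> L2_01" for i
    unfolding F_def by (rule Kop_tail_L2_01[OF G(1)])
  note F_L2_lim = F_L2_lim[folded F_def]
  have "\<forall>i. norm (norm01 (F i) - norm01 h) \<le> norm01 (\<lambda>x. F i x - h x)"
    using abs_norm01_diff_le[OF F_L2 h] by simp
  from Lim_null_comparison[OF always_eventually[OF this] F_L2_lim]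
  have "(\<lambda>i. norm01 (F i)) \<longlonglongrightarrow> norm01 h"
    by (rule LIM_zero_cancel)
  moreover have "(\<lambda>i. norm01 (F i)) \<longlonglongrightarrow> q"
    using LIMSEQ_subseq_LIMSEQ[OF norm_lim s] by (simp add: F_def comp_def)
  ultimately have "norm01 h = q"
    by (rule LIMSEQ_unique)
  moreover have "Kop_tail N (Kop_tail N h) x = q\<^sup>2 * h x" if x: "x \<in> {0..1}" for x
  proof -
    define D where "D i = norm01 (\<lambda>y. Kop_tail N (F i) y - q\<^sup>2 * G (s i) y)" for i
    have "(\<lambda>i. D i) \<longlonglongrightarrow> 0"
      using LIMSEQ_subseq_LIMSEQ[OF approx_eigen s] by (simp add: D_def F_def comp_def)
    then have "(\<lambda>i. (D i + norm01 (\<lambda>y. F i y - h y) / 2) / 2) \<longlonglongrightarrow> (0 + 0 / 2) / 2"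
      by (intro tendsto_intros F_L2_lim) simp_all
    then have bound_lim: "(\<lambda>i. (D i + norm01 (\<lambda>y. F i y - h y) / 2) / 2) \<longlonglongrightarrow> 0"
      by simp
    have "norm (q\<^sup>2 * F i x - Kop_tail N (Kop_tail N h) x) \<le> (D i + norm01 (\<lambda>y. F i y - h y) / 2) / 2"
      for i
      using abs_Kop_tail_square_diff_le[OF x G(1)[of "s i"] h, where c="q\<^sup>2" and N=N]
      by (simp add: D_def F_def)
    from Lim_null_comparison[OF always_eventually[OF allI[OF this]] bound_lim]
    have "(\<lambda>i. q\<^sup>2 * F i x) \<longlonglongrightarrow> Kop_tail N (Kop_tail N h) x"
      by (rule LIM_zero_cancel)
    moreover have "(\<lambda>i. q\<^sup>2 * F i x) \<longlonglongrightarrow> q\<^sup>2 * h x"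
      using F_lim[OF x] by (intro tendsto_mult_left) (simp add: F_def)
    ultimately show ?thesis
      by (rule LIMSEQ_unique)
  qed
  ultimately show ?thesis
    using that h q by simp
qed

lemma norm01_Kop_tail_square:
  assumes "w \<in> L2_01"
  shows "(norm01 (Kop_tail N w))\<^sup>2 = inner01 w (Kop_tail N (Kop_tail N w))"
  using Kop_tail_selfadjoint[OF assms Kop_tail_L2_01[OF assms, of N], of N]
  by (simp add: inner01_self[symmetric])

lemma norm01_Kop_tail_square_diff:
  assumes w: "w \<in> L2_01"
  shows "(norm01 (\<lambda>x. Kop_tail N (Kop_tail N w) x - c * w x))\<^sup>2
    = (norm01 (Kop_tail N (Kop_tail N w)))\<^sup>2 - 2 * c * (norm01 (Kop_tail N w))\<^sup>2 + c\<^sup>2 * (norm01 w)\<^sup>2"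
proof -
  have "inner01 (Kop_tail N (Kop_tail N w)) w = (norm01 (Kop_tail N w))\<^sup>2"
    using norm01_Kop_tail_square[OF w, of N] inner01_commute by metis
  with inner01_self_cmult_diff[OF Kop_tail_L2_01[OF Kop_tail_L2_01[OF w, of N], of N] w, where a=1 and c=c]
  show ?thesis
    by (simp add: inner01_self)
qed

text \<open>Power iteration: the ratios \<open>\<parallel>T\<^sup>k\<^sup>+\<^sup>1 u\<parallel> / \<parallel>T\<^sup>k u\<parallel>\<close> increase (by self-adjointness and
  Cauchy--Schwarz) to some \<open>q\<close>, and the normalised iterates are approximate eigenvectors
  of \<open>T\<^sup>2\<close> with eigenvalue \<open>q\<^sup>2\<close>.\<close>

lemma Kop_tail_power_iteration:
  assumes u: "u \<in> L2_01" and c: "0 \<le> c" and big: "c * norm01 u < norm01 (Kop_tail N u)"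
  obtains G q where "\<And>k. G k \<in> L2_01" "\<And>k. norm01 (G k) \<le> 1" "c < q"
    "(\<lambda>k. norm01 (\<lambda>x. Kop_tail N (Kop_tail N (G k)) x - q\<^sup>2 * G k x)) \<longlonglongrightarrow> 0"
    "(\<lambda>k. norm01 (Kop_tail N (G k))) \<longlonglongrightarrow> q"
proof -
  define f where "f k = (Kop_tail N ^^ k) u" for k
  have f_Suc: "f (Suc k) = Kop_tail N (f k)" for k
    by (simp add: f_def)
  have f_L2: "f k \<in> L2_01" for k
    by (induction k) (simp_all add: f_def u Kop_tail_L2_01)
  define n where "n k = norm01 (f k)" for k
  have log_convex: "(n (Suc k))\<^sup>2 \<le> n k * n (Suc (Suc k))" for k
    using norm01_Kop_tail_square[OF f_L2[of k], of N]
      inner01_Cauchy_Schwarz[OF f_L2[of k] f_L2[of "Suc (Suc k)"]]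
    by (simp add: n_def f_Suc abs_le_iff)
  have "0 \<le> c * norm01 u" "n (Suc 0) = norm01 (Kop_tail N u)"
    using c by (simp_all add: norm01_nonneg n_def f_def)
  then have n1: "n (Suc 0) > 0"
    using big by linarith
  then have n0: "n 0 > 0"
    using norm01_Kop_tail_le[OF u, of N] by (simp add: n_def f_def)
  have n_bound: "n (Suc k) \<le> 1/2 * n k" for k
    using norm01_Kop_tail_le[OF f_L2[of k], of N] by (simp add: n_def f_Suc)
  have n_pos: "n k > 0" for k
    using log_convex_ratio_convergent(1)[OF n0 n1 log_convex n_bound] by blast
  define rho where "rho k = n (Suc k) / n k" for k
  obtain q where rho_lim: "rho \<longlonglongrightarrow> q" and "rho 0 \<le> q"
    using log_convex_ratio_convergent(2)[OF n0 n1 log_convex n_bound] unfolding rho_def[abs_def] by blast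
  have "c < rho 0"
    using big n_pos[of 0] by (simp add: rho_def n_def f_def pos_less_divide_eq)
  with \<open>rho 0 \<le> q\<close> have "c < q"
    by linarith
  define G where "G k = (\<lambda>y. (1 / n k) * f k y)" for k
  have G_L2: "G k \<in> L2_01" for k
    unfolding G_def by (rule L2_01_cmult[OF f_L2])
  have G_le: "norm01 (G k) \<le> 1" for k
    using n_pos[of k] unfolding G_def norm01_cmult by (simp add: n_def)
  have TG: "Kop_tail N (G k) = (\<lambda>y. (1 / n k) * f (Suc k) y)" for k
    by (rule ext) (simp only: G_def Kop_tail_cmult f_Suc)
  have "norm01 (Kop_tail N (G k)) = rho k" for k
    using n_pos[of k] unfolding TG norm01_cmult by (simp add: rho_def n_def)
  then have norm_lim: "(\<lambda>k. norm01 (Kop_tail N (G k))) \<longlonglongrightarrow> q"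
    using rho_lim by simp
  have approx_square: "(norm01 (\<lambda>x. Kop_tail N (Kop_tail N (G k)) x - q\<^sup>2 * G k x))\<^sup>2
      = (rho (Suc k) * rho k)\<^sup>2 - 2 * q\<^sup>2 * (rho k)\<^sup>2 + (q\<^sup>2)\<^sup>2" for k
  proof -
    have "(\<lambda>x. Kop_tail N (Kop_tail N (G k)) x - q\<^sup>2 * G k x)
        = (\<lambda>x. (1 / n k) * (Kop_tail N (Kop_tail N (f k)) x - q\<^sup>2 * f k x))"
      unfolding TG by (rule ext) (simp only: Kop_tail_cmult f_Suc G_def right_diff_distrib mult.left_commute)
    then have "(norm01 (\<lambda>x. Kop_tail N (Kop_tail N (G k)) x - q\<^sup>2 * G k x))\<^sup>2
        = (1 / n k)\<^sup>2 * (norm01 (\<lambda>x. Kop_tail N (Kop_tail N (f k)) x - q\<^sup>2 * f k x))\<^sup>2"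
      using n_pos[of k] by (simp only: norm01_cmult power_mult_distrib power2_abs)
    then show ?thesis
      using norm01_Kop_tail_square_diff[OF f_L2[of k], of N "q\<^sup>2"] n_pos[of k] n_pos[of "Suc k"]
      by (simp add: rho_def n_def f_Suc power2_eq_square field_simps)
  qed
  have "(\<lambda>k. (rho (Suc k) * rho k)\<^sup>2 - 2 * q\<^sup>2 * (rho k)\<^sup>2 + (q\<^sup>2)\<^sup>2)
      \<longlonglongrightarrow> (q * q)\<^sup>2 - 2 * q\<^sup>2 * q\<^sup>2 + (q\<^sup>2)\<^sup>2"
    by (intro tendsto_intros rho_lim LIMSEQ_Suc[OF rho_lim])
  then have "(\<lambda>k. (norm01 (\<lambda>x. Kop_tail N (Kop_tail N (G k)) x - q\<^sup>2 * G k x))\<^sup>2) \<longlonglongrightarrow> 0"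
    unfolding approx_square by (simp add: power2_eq_square)
  from tendsto_real_sqrt[OF this]
  have approx_eigen: "(\<lambda>k. norm01 (\<lambda>x. Kop_tail N (Kop_tail N (G k)) x - q\<^sup>2 * G k x)) \<longlonglongrightarrow> 0"
    by (simp add: norm01_nonneg)
  show ?thesis
    by (rule that[OF G_L2 G_le \<open>c < q\<close> approx_eigen norm_lim])
qed

lemma norm01_Kop_tail_le_inverse_lam:
  assumes u: "u \<in> L2_01"
  shows "norm01 (Kop_tail N u) \<le> norm01 u / \<bar>lam N\<bar>"
proof (rule ccontr)
  assume not_le: "\<not> ?thesis"
  have "0 \<le> 1 / \<bar>lam N\<bar>"
    by simp
  moreover have "(1 / \<bar>lam N\<bar>) * norm01 u < norm01 (Kop_tail N u)"
    using not_le by simp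
  ultimately obtain G q where G: "\<And>k. G k \<in> L2_01" "\<And>k. norm01 (G k) \<le> 1" and q: "1 / \<bar>lam N\<bar> < q"
    and approx_eigen: "(\<lambda>k. norm01 (\<lambda>x. Kop_tail N (Kop_tail N (G k)) x - q\<^sup>2 * G k x)) \<longlonglongrightarrow> 0"
    and norm_lim: "(\<lambda>k. norm01 (Kop_tail N (G k))) \<longlonglongrightarrow> q"
    by (rule Kop_tail_power_iteration[OF u]) blast+
  have "q > 0"
    using q lam_nonzero[of N] by (meson less_trans zero_less_divide_1_iff zero_less_abs_iff)
  then obtain h where
    h: "h \<in> L2_01" "norm01 h > 0" "\<And>x. x \<in> {0..1} \<Longrightarrow> Kop_tail N (Kop_tail N h) x = q\<^sup>2 * h x"
    by (rule Kop_tail_approx_eigen_imp_eigen[where G=G and N=N, OF G _ approx_eigen norm_lim]) blast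
  from eigenvalue_Kop_tail_square_le[OF h(1,2) \<open>q > 0\<close> h(3)] q show False
    by simp
qed

section \<open>Convergence of the eigenfunction expansion of \<open>K2\<close>\<close>

lemma sum_inverse_lam_square_le: "(\<Sum>j<N. 1 / (lam j)\<^sup>2) \<le> 1/4"
proof -
  have integrable: "integrable lebesgue01 (\<lambda>x. (Kcoeff j x)\<^sup>2)" for j
    by (rule L2_01_integrable_square[OF Kcoeff_L2_01])
  have "int01 (\<lambda>x. (Kcoeff j x)\<^sup>2) = 1 / (lam j)\<^sup>2" for j
    using inner01_Kcoeff_self[of j] by (simp add: inner01_def power2_eq_square)
  then have "(\<Sum>j<N. 1 / (lam j)\<^sup>2) = int01 (\<lambda>x. \<Sum>j<N. (Kcoeff j x)\<^sup>2)"
    using integrable by (simp add: Bochner_Integration.integral_sum)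
  also have "\<dots> \<le> 1/4"
  proof (rule integral_lebesgue01_le_const)
    show "integrable lebesgue01 (\<lambda>x. \<Sum>j<N. (Kcoeff j x)\<^sup>2)"
      using integrable by auto
    show "(\<Sum>j<N. (Kcoeff j x)\<^sup>2) \<le> 1/4" if "x \<in> {0..1}" for x
      using sum_Kcoeff_square_le[OF that, of N] K2_le[of x] by linarith
  qed
  finally show ?thesis .
qed

lemma inverse_abs_lam_tendsto_0: "(\<lambda>N. 1 / \<bar>lam N\<bar>) \<longlonglongrightarrow> 0"
proof -
  have "summable (\<lambda>j. 1 / (lam j)\<^sup>2)"
    by (rule summableI_nonneg_bounded[where x="1/4"], simp, rule sum_inverse_lam_square_le)
  then have "(\<lambda>j. 1 / (lam j)\<^sup>2) \<longlonglongrightarrow> 0"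
    by (rule summable_LIMSEQ_zero)
  from tendsto_real_sqrt[OF this] show ?thesis
    by (simp add: real_sqrt_divide)
qed

text \<open>With \<open>u = K_tail N y\<close> and \<open>v = Kop_tail N u\<close> we have \<open>\<parallel>u\<parallel>\<^sup>2 = v(y)\<close>; \<open>v\<close> is small in
  $L^2$ since \<open>\<parallel>v\<parallel> \<le> \<parallel>u\<parallel> / |lam N|\<close>, and it varies little near \<open>y\<close>, so \<open>v(y)\<close> itself is small.\<close>

lemma inner01_K_tail_self_le:
  assumes \<delta>: "0 < \<delta>" "\<delta> \<le> y" "y \<le> 1"
    and close: "\<And>z. z \<in> {y - \<delta>..y} \<Longrightarrow> norm01 (\<lambda>t. K y t - K z t) \<le> \<eta>"
  shows "inner01 (K_tail N y) (K_tail N y) \<le> 1 / (2 * \<bar>lam N\<bar> * sqrt \<delta>) + \<eta> / 2"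
proof -
  have y01: "y \<in> {0..1}"
    using \<delta> by auto
  have "y \<in> {y - \<delta>..y}"
    using \<delta> by auto
  then have \<eta>: "0 \<le> \<eta>"
    using close norm01_nonneg order_trans by blast
  define u where "u = K_tail N y"
  define v where "v = Kop_tail N u"
  have u: "u \<in> L2_01" "norm01 u \<le> 1/2"
    unfolding u_def by (rule K_tail_L2_01, rule norm01_K_tail_le[OF y01])
  have v: "v \<in> L2_01"
    unfolding v_def by (rule Kop_tail_L2_01[OF u(1)])
  have "v y = inner01 u u"
    using Kop_tail_eq_inner01[OF y01 u(1), of N] unfolding v_def u_def by simp
  moreover have "v y \<le> norm01 v / sqrt \<delta> + \<eta> / 2"
  proof (rule le_norm01_div_sqrt_add[OF v \<delta>])
    fix z assume z: "z \<in> {y - \<delta>..y}"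
    then have "z \<in> {0..1}"
      using \<delta> by auto
    then have "\<bar>v y - v z\<bar> \<le> \<eta> * (1/2)"
      using abs_Kop_tail_diff_le[OF y01 _ u(1), of z N] close[OF z] u(2) \<eta>
        mult_mono[of "norm01 (\<lambda>t. K y t - K z t)" \<eta> "norm01 u" "1/2"] norm01_nonneg
      by (force simp: v_def)
    then show "v y \<le> \<bar>v z\<bar> + \<eta> / 2"
      by linarith
  qed
  moreover have "norm01 v / sqrt \<delta> \<le> 1 / (2 * \<bar>lam N\<bar> * sqrt \<delta>)"
  proof -
    have "norm01 u / \<bar>lam N\<bar> \<le> (1/2) / \<bar>lam N\<bar>"
      by (rule divide_right_mono[OF u(2)]) simp
    then have "norm01 v \<le> (1/2) / \<bar>lam N\<bar>"
      using norm01_Kop_tail_le_inverse_lam[OF u(1), of N] unfolding v_def by linarith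
    then have "norm01 v / sqrt \<delta> \<le> (1/2) / \<bar>lam N\<bar> / sqrt \<delta>"
      by (rule divide_right_mono) (use \<delta> in simp)
    then show ?thesis
      by (simp add: mult_ac)
  qed
  ultimately have "inner01 u u \<le> 1 / (2 * \<bar>lam N\<bar> * sqrt \<delta>) + \<eta> / 2"
    by linarith
  then show ?thesis
    by (simp add: u_def)
qed

lemma norm01_K_tail_uniformly_small:
  assumes \<epsilon>: "0 < \<epsilon>" "\<epsilon> \<le> 1" and e: "e > 0"
  obtains N0 where "\<And>N y. N \<ge> N0 \<Longrightarrow> y \<in> {\<epsilon>..1} \<Longrightarrow> norm01 (K_tail N y) \<le> e"
proof -
  obtain d where d: "d > 0"
    "\<And>y z. y \<in> {\<epsilon>/2..1} \<Longrightarrow> z \<in> {\<epsilon>/2..1} \<Longrightarrow> \<bar>y - z\<bar> < d \<Longrightarrow> norm01 (\<lambda>t. K y t - K z t) \<le> e\<^sup>2"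
    using norm01_K_diff_uniformly_small[of "\<epsilon>/2" "e\<^sup>2"] \<epsilon> e by auto
  define \<delta> where "\<delta> = min (d / 2) (\<epsilon> / 2)"
  have \<delta>: "\<delta> > 0" "\<delta> < d" "\<delta> \<le> \<epsilon> / 2"
    using d \<epsilon> by (auto simp: \<delta>_def)
  have "(\<lambda>N. 1 / \<bar>lam N\<bar> * (1 / (2 * sqrt \<delta>))) \<longlonglongrightarrow> 0"
    by (rule tendsto_mult_left_zero[OF inverse_abs_lam_tendsto_0])
  then have "\<forall>\<^sub>F N in sequentially. 1 / \<bar>lam N\<bar> * (1 / (2 * sqrt \<delta>)) < e\<^sup>2 / 2"
    using e by (intro order_tendstoD(2)) auto
  then obtain N0 where N0: "\<And>N. N \<ge> N0 \<Longrightarrow> 1 / \<bar>lam N\<bar> * (1 / (2 * sqrt \<delta>)) < e\<^sup>2 / 2"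
    unfolding eventually_sequentially by blast
  have "inner01 (K_tail N y) (K_tail N y) \<le> e\<^sup>2" if N: "N \<ge> N0" and y: "y \<in> {\<epsilon>..1}" for N y
  proof -
    have "inner01 (K_tail N y) (K_tail N y) \<le> 1 / (2 * \<bar>lam N\<bar> * sqrt \<delta>) + e\<^sup>2 / 2"
    proof (rule inner01_K_tail_self_le)
      show "0 < \<delta>" "\<delta> \<le> y" "y \<le> 1"
        using y \<delta> by auto
      show "norm01 (\<lambda>t. K y t - K z t) \<le> e\<^sup>2" if "z \<in> {y - \<delta>..y}" for z
        using that y \<delta> by (intro d(2)) auto
    qed
    moreover have "1 / (2 * \<bar>lam N\<bar> * sqrt \<delta>) = 1 / \<bar>lam N\<bar> * (1 / (2 * sqrt \<delta>))"
      by (simp add: mult_ac)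
    ultimately show ?thesis
      using N0[OF N] by linarith
  qed
  then show ?thesis
    using e by (intro that[of N0]) (simp add: norm01_le_iff)
qed

lemma norm01_K_tail_tendsto_0:
  assumes "x \<in> {0..1}"
  shows "(\<lambda>n. norm01 (K_tail n x)) \<longlonglongrightarrow> 0"
proof (cases "x = 0")
  case True
  then show ?thesis
    by (simp add: norm01_eq_0)
next
  case False
  show ?thesis
  proof (rule LIMSEQ_I)
    fix e :: real assume "e > 0"
    then obtain N0 where "\<And>N y. N \<ge> N0 \<Longrightarrow> y \<in> {x..1} \<Longrightarrow> norm01 (K_tail N y) \<le> e / 2"
      using norm01_K_tail_uniformly_small[of x "e / 2"] assms False by auto
    then show "\<exists>N0. \<forall>n\<ge>N0. norm (norm01 (K_tail n x) - 0) < e"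
      using assms \<open>e > 0\<close> norm01_nonneg by (intro exI[of _ N0]) fastforce
  qed
qed

lemma abs_K2_minus_sum_Kcoeff_le:
  "x \<in> {0..1} \<Longrightarrow> y \<in> {0..1} \<Longrightarrow>
    \<bar>K2 x y - (\<Sum>j<n. Kcoeff j x * Kcoeff j y)\<bar> \<le> norm01 (K_tail n x) * norm01 (K_tail n y)"
  using inner01_K_tail[of x y n] inner01_Cauchy_Schwarz[OF K_tail_L2_01 K_tail_L2_01, of n x n y]
  by simp

lemma summable_abs_Kcoeff_mult:
  assumes x: "x \<in> {0..1}" and y: "y \<in> {0..1}"
  shows "summable (\<lambda>j. \<bar>Kcoeff j x * Kcoeff j y\<bar>)"
proof (rule summableI_nonneg_bounded[where x="1/4"])
  fix n
  have "(\<Sum>j<n. \<bar>Kcoeff j x * Kcoeff j y\<bar>) \<le> (\<Sum>j<n. ((Kcoeff j x)\<^sup>2 + (Kcoeff j y)\<^sup>2) / 2)"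
  proof (rule sum_mono)
    fix j
    show "\<bar>Kcoeff j x * Kcoeff j y\<bar> \<le> ((Kcoeff j x)\<^sup>2 + (Kcoeff j y)\<^sup>2) / 2"
      using sum_squares_bound[of "\<bar>Kcoeff j x\<bar>" "\<bar>Kcoeff j y\<bar>"] by (simp add: abs_mult)
  qed
  also have "\<dots> = ((\<Sum>j<n. (Kcoeff j x)\<^sup>2) + (\<Sum>j<n. (Kcoeff j y)\<^sup>2)) / 2"
    by (simp only: sum.distrib[symmetric] sum_divide_distrib)
  also have "\<dots> \<le> 1/4"
    using sum_Kcoeff_square_le[OF x, of n] sum_Kcoeff_square_le[OF y, of n] K2_le[of x] K2_le[of y]
    unfolding add_divide_distrib by linarith
  finally show "(\<Sum>j<n. \<bar>Kcoeff j x * Kcoeff j y\<bar>) \<le> 1/4" .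
qed simp

lemma Kcoeff_series_sums:
  assumes x: "x \<in> {0..1}" and y: "y \<in> {0..1}"
  shows "(\<lambda>j. Kcoeff j x * Kcoeff j y) sums K2 x y"
proof -
  have "norm (K2 x y - (\<Sum>j<n. Kcoeff j x * Kcoeff j y)) \<le> norm01 (K_tail n x) * (1/2)" for n
  proof -
    have "norm01 (K_tail n x) * norm01 (K_tail n y) \<le> norm01 (K_tail n x) * (1/2)"
      by (rule mult_left_mono[OF norm01_K_tail_le[OF y] norm01_nonneg])
    then show ?thesis
      using abs_K2_minus_sum_Kcoeff_le[OF x y, of n] by simp
  qed
  from Lim_null_comparison[OF always_eventually[OF allI[OF this]]
      tendsto_mult_left_zero[OF norm01_K_tail_tendsto_0[OF x]]]
  have "(\<lambda>n. K2 x y - (\<Sum>j<n. Kcoeff j x * Kcoeff j y)) \<longlonglongrightarrow> 0" .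
  then have "(\<lambda>n. \<Sum>j<n. Kcoeff j x * Kcoeff j y) \<longlonglongrightarrow> K2 x y"
    using tendsto_diff[OF tendsto_const[of "K2 x y"]] by fastforce
  then show ?thesis
    by (simp add: sums_def)
qed

lemma Kcoeff_series_uniformly_convergent:
  assumes \<epsilon>: "0 < \<epsilon>" "\<epsilon> \<le> 1"
  shows "uniformly_convergent_on ({0..1} \<times> {0..1} - {0<..<\<epsilon>} \<times> {0<..<\<epsilon>})
    (\<lambda>n (x, y). \<Sum>j<n. Kcoeff j x * Kcoeff j y)"
  unfolding uniformly_convergent_on_def
proof (intro exI uniform_limitI)
  fix e :: real assume e: "e > 0"
  then obtain N0 where N0: "\<And>N w. N \<ge> N0 \<Longrightarrow> w \<in> {\<epsilon>..1} \<Longrightarrow> norm01 (K_tail N w) \<le> e"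
    using norm01_K_tail_uniformly_small[OF \<epsilon>] by blast
  have small: "norm01 (K_tail n w) \<le> e" if "n \<ge> N0" "w \<in> {0..1} - {0<..<\<epsilon>}" for n w
    using N0[OF that(1)] that(2) e by (cases "w = 0") (auto simp: norm01_eq_0)
  have close: "\<bar>K2 x y - (\<Sum>j<n. Kcoeff j x * Kcoeff j y)\<bar> < e"
    if n: "n \<ge> N0" and xy: "(x, y) \<in> {0..1} \<times> {0..1} - {0<..<\<epsilon>} \<times> {0<..<\<epsilon>}" for n x y
  proof -
    have x: "x \<in> {0..1}" and y: "y \<in> {0..1}"
      using xy by auto
    have "norm01 (K_tail n x) * norm01 (K_tail n y) \<le> e * (1/2)"
      using xy small[OF n, of x] small[OF n, of y] norm01_K_tail_le[OF x, of n] norm01_K_tail_le[OF y, of n]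
        mult_mono[of "norm01 (K_tail n x)" e "norm01 (K_tail n y)" "1/2"]
        mult_mono[of "norm01 (K_tail n x)" "1/2" "norm01 (K_tail n y)" e] norm01_nonneg e
      by auto
    then show ?thesis
      using abs_K2_minus_sum_Kcoeff_le[OF x y, of n] e by linarith
  qed
  show "\<forall>\<^sub>F n in sequentially. \<forall>p\<in>{0..1} \<times> {0..1} - {0<..<\<epsilon>} \<times> {0<..<\<epsilon>}.
      dist ((\<lambda>n (x, y). \<Sum>j<n. Kcoeff j x * Kcoeff j y) n p) ((\<lambda>(x, y). K2 x y) p) < e"
    unfolding eventually_sequentially
  proof (intro exI[of _ N0] allI impI ballI, goal_cases)
    case (1 n p)
    moreover obtain x y where "p = (x, y)"
      by fastforce
    ultimately show ?case
      using close[of n x y] by (simp add: dist_real_def abs_minus_commute)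
  qed
qed

end

theorem theorem2p11:
  fixes phi :: "nat \<Rightarrow> real \<Rightarrow> real" and lam :: "nat \<Rightarrow> real"
  assumes "max_eigen_system phi lam"
  shows "(\<forall>\<epsilon>::real. 0 < \<epsilon> \<and> \<epsilon> \<le> 1 \<longrightarrow>
            uniformly_convergent_on (({0..1} \<times> {0..1}) - ({0<..<\<epsilon>} \<times> {0<..<\<epsilon>}))
              (\<lambda>n (x, y). \<Sum>j<n. phi j x * phi j y / (lam j)\<^sup>2))
       \<and> (\<forall>x\<in>{0..1}. \<forall>y\<in>{0..1}.
            summable (\<lambda>j. \<bar>phi j x * phi j y / (lam j)\<^sup>2\<bar>) \<and>
            (\<lambda>j. phi j x * phi j y / (lam j)\<^sup>2) sums K2 x y)"
proof -
  interpret eigensystem phi lam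
    by unfold_locales (rule assms)
  have Kcoeff_mult: "phi j x * phi j y / (lam j)\<^sup>2 = Kcoeff j x * Kcoeff j y" for j x y
    by (simp add: Kcoeff_def power2_eq_square)
  show ?thesis
    unfolding Kcoeff_mult
    using Kcoeff_series_uniformly_convergent summable_abs_Kcoeff_mult Kcoeff_series_sums by blast
qed

end
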